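(* Work in max-plus algebra. For $k=1,2,\ldots$ let \[ \bm{A}(k)=\begin{pmatrix}\alpha_k&\bm{T}_{12}(k)\\ \bm{0}&\bm{D}\end{pmatrix}, \] where $\alpha_k$ are i.i.d. real random variables with finite expected value and variance, $\bm{T}_{12}(k)$ is a random row vector, $\bm{0}$ is a column of $-\infty$ entries, and $\bm{D}$ is a constant (nonrandom) square matrix with no entries equal to $-\infty$. Let $\bm{T}(k)$ be the matrix equal to $\bm{A}(k)$ in the position of $\bm{T}_{12}(k)$ and $-\infty$ elsewhere, and assume the random variables $\|\bm{T}(k)\|$ (the maximum entry of $\bm{T}_{12}(k)$), $k=1,2,\ldots$, are i.i.d. with nonnegative expectation and finite variance. Assume the random entries of $\bm{A}(1),\bm{A}(2),\ldots$ are i.i.d. across $k$. Let $\mu_1=\mathsf{E}\alpha_1\ge0$ and $\mu_2=\rho(\bm{D})>0$. Then the Lyapunov exponent of the system $\bm{x}(k)=\bm{A}^{T}(k)\bm{x}(k-1)$, $\bm{x}(0)=\bm{1}$, namely \[ \lambda=\lim_{k\to\infty}\|\bm{A}_k\|^{1/k}=\lim_{k\to\infty}\frac1k\,\mathsf{E}\|\bm{A}_k\|,\qquad \bm{A}_k=\bm{A}(1)\cdots\bm{A}(k), \] equals $\lambda=\mu_1\oplus\mu_2=\max(\mu_1,\mu_2)$.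
   Context: Max-plus algebra is $(\mathbb{R}\cup\{-\infty\},\oplus=\max,\otimes=+)$ with zero $-\infty$ and identity $0$; matrix products are $(\bm{A}\bm{C})_{ij}=\max_k(a_{ik}+c_{kj})$ and powers $\bm{D}^{m}$ are taken in this sense. $\bm{1}$ is the vector of all zeros. The norm $\|\bm{A}\|$ of a matrix is its maximum entry; $\|\bm{A}_k\|^{1/k}$ means $\|\bm{A}_k\|/k$. The spectral radius of an $n\times n$ matrix $\bm{D}$ is $\rho(\bm{D})=\max_{1\le m\le n}\frac1m\max_{1\le i\le n}(\bm{D}^{m})_{ii}$, i.e. the maximum mean weight of a cycle. Note $\bm{x}(k)=\bm{A}_k^{T}\bm{x}(0)$ so $\max_i x_i(k)=\|\bm{A}_k\|$. *)

theory Defs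
  imports "HOL-Probability.Probability"
begin

text \<open>Max-plus algebra over ereal (only the value -\<infinity> is used as the
  max-plus zero; entries are never +\<infinity>).  Square matrices of size N are
  represented as functions nat \<Rightarrow> nat \<Rightarrow> ereal with indices < N.\<close>

definition mp_mult :: "nat \<Rightarrow> (nat \<Rightarrow> nat \<Rightarrow> ereal) \<Rightarrow> (nat \<Rightarrow> nat \<Rightarrow> ereal) \<Rightarrow> nat \<Rightarrow> nat \<Rightarrow> ereal" where
  "mp_mult N A C = (\<lambda>i j. Max ((\<lambda>l. A i l + C l j) ` {..<N}))"

definition mp_id :: "nat \<Rightarrow> nat \<Rightarrow> ereal" where
  "mp_id = (\<lambda>i j. if i = j then 0 else -\<infinity>)"

fun mp_pow :: "nat \<Rightarrow> (nat \<Rightarrow> nat \<Rightarrow> ereal) \<Rightarrow> nat \<Rightarrow> nat \<Rightarrow> nat \<Rightarrow> ereal" where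
  "mp_pow N D 0 = mp_id"
| "mp_pow N D (Suc m) = mp_mult N (mp_pow N D m) D"

definition mp_norm :: "nat \<Rightarrow> (nat \<Rightarrow> nat \<Rightarrow> ereal) \<Rightarrow> ereal" where
  "mp_norm N A = Max {A i j | i j. i < N \<and> j < N}"

definition mp_rho :: "nat \<Rightarrow> (nat \<Rightarrow> nat \<Rightarrow> ereal) \<Rightarrow> ereal" where
  "mp_rho N D = Max ((\<lambda>m. Max ((\<lambda>i. mp_pow N D m i i) ` {..<N}) / ereal (real m)) ` {1..N})"

text \<open>The matrix A(k) of size n+1: index 0 is the alpha-row/column,
  indices 1..n carry the block D; T k j is the (0, j+1) entry.\<close>
definition Amat :: "nat \<Rightarrow> (nat \<Rightarrow> nat \<Rightarrow> real) \<Rightarrow> real \<Rightarrow> (nat \<Rightarrow> ereal) \<Rightarrow> nat \<Rightarrow> nat \<Rightarrow> ereal" where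
  "Amat n D a t = (\<lambda>i j. if i = 0 \<and> j = 0 then ereal a
                         else if i = 0 then t (j - 1)
                         else if j = 0 then -\<infinity>
                         else ereal (D (i - 1) (j - 1)))"

fun mp_prod :: "nat \<Rightarrow> (nat \<Rightarrow> nat \<Rightarrow> nat \<Rightarrow> ereal) \<Rightarrow> nat \<Rightarrow> nat \<Rightarrow> nat \<Rightarrow> ereal" where
  "mp_prod N Aseq 0 = mp_id"
| "mp_prod N Aseq (Suc k) = mp_mult N (mp_prod N Aseq k) (Aseq (Suc k))"

end

theory Submission
  imports Defs "HOL-Library.Discrete_Functions"
begin

text \<open>The product \<open>A(1) \<otimes> \<dots> \<otimes> A(k)\<close> is again block triangular: its corner is the partial
  sum \<open>S\<^sub>k = \<alpha>\<^sub>1 + \<dots> + \<alpha>\<^sub>k\<close>, its lower block is the max-plus power \<open>D\<^sup>k\<close>, and an entry of its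
  first row is a maximum over \<open>l < k\<close> of \<open>S\<^sub>l\<close> plus an entry of \<open>T(l + 1)\<close> plus an entry of the
  power \<open>k - l - 1\<close> of \<open>D\<close>. Since \<open>D - \<rho>(D)\<close> has no cycle of positive weight, \<open>D\<close> has a max-plus
  subeigenvector, which bounds the entries of \<open>D\<^sup>k\<close> above by \<open>k \<rho>(D)\<close> plus a constant, while a
  critical cycle bounds a diagonal entry below by \<open>k \<rho>(D)\<close> minus a constant. Hence \<open>\<parallel>A\<^sub>k\<parallel>\<close> is at
  least \<open>max S\<^sub>k (k \<rho>(D)) - C\<close> and at most the maximum of \<open>S\<^sub>k\<close>, \<open>k \<rho>(D)\<close> and
  \<open>S\<^sub>l + \<parallel>T(l + 1)\<parallel> + (k - l - 1) \<rho>(D)\<close> for \<open>l < k\<close>, plus \<open>C\<close>. By the strong law of large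
  numbers \<open>S\<^sub>k / k \<rightarrow> \<mu>\<^sub>1\<close> and \<open>\<parallel>T(k)\<parallel> / k \<rightarrow> 0\<close> almost surely, and then both bounds divided
  by \<open>k\<close> tend to \<open>max \<mu>\<^sub>1 \<rho>(D)\<close>. The same estimates dominate \<open>\<bar>\<parallel>A\<^sub>k\<parallel>\<bar> / k\<close> by averages of
  \<open>\<bar>\<alpha>\<^sub>l\<bar>\<close> and \<open>\<bar>\<parallel>T(l)\<parallel>\<bar>\<close>, which converge almost surely and in mean, so the expectations
  converge as well.\<close>

section \<open>Maximal walk weights of a real matrix\<close>

text \<open>\<open>max_walk n D k i j\<close> is the entry \<open>(D^(k+1))\<^sub>i\<^sub>j\<close> of the max-plus power, i.e. the maximal
  weight of a walk with \<open>k + 1\<close> steps; the index shift keeps every entry real.\<close>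

fun max_walk :: "nat \<Rightarrow> (nat \<Rightarrow> nat \<Rightarrow> real) \<Rightarrow> nat \<Rightarrow> nat \<Rightarrow> nat \<Rightarrow> real" where
  "max_walk n D 0 = D"
| "max_walk n D (Suc k) = (\<lambda>i j. Max ((\<lambda>l. max_walk n D k i l + D l j) ` {..<n}))"

lemma mp_pow_eq_max_walk:
  assumes "i < n"
  shows "mp_pow n (\<lambda>i j. ereal (D i j)) (Suc k) i j = ereal (max_walk n D k i j)"
proof (induction k arbitrary: j)
  case 0
  have "Max ((\<lambda>l. mp_id i l + ereal (D l j)) ` {..<n}) = ereal (D i j)"
    by (rule Max_eqI) (use assms in \<open>auto simp: mp_id_def\<close>)
  then show ?case by (simp add: mp_mult_def)
next
  case (Suc k)
  have "mp_pow n (\<lambda>i j. ereal (D i j)) (Suc (Suc k)) i j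
      = Max (ereal ` ((\<lambda>l. max_walk n D k i l + D l j) ` {..<n}))"
    using Suc by (simp add: mp_mult_def image_image)
  also have "\<dots> = ereal (Max ((\<lambda>l. max_walk n D k i l + D l j) ` {..<n}))"
    by (rule mono_Max_commute[symmetric]) (use assms in \<open>auto simp: mono_def\<close>)
  finally show ?case by simp
qed

definition walk_weight :: "(nat \<Rightarrow> nat \<Rightarrow> real) \<Rightarrow> (nat \<Rightarrow> nat) \<Rightarrow> nat \<Rightarrow> real" where
  "walk_weight D p k = (\<Sum>l<k. D (p l) (p (Suc l)))"

lemma walk_weight_Suc: "walk_weight D p (Suc k) = walk_weight D p k + D (p k) (p (Suc k))"
  by (simp add: walk_weight_def)

lemma walk_weight_add: "walk_weight D p (x + y) = walk_weight D p x + walk_weight D (\<lambda>t. p (x + t)) y"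
  by (induction y) (simp_all add: walk_weight_def)

lemma walk_weight_cong: "(\<And>t. t \<le> x \<Longrightarrow> p t = q t) \<Longrightarrow> walk_weight D p x = walk_weight D q x"
  unfolding walk_weight_def by (rule sum.cong) auto

lemma walk_weight_le_max_walk:
  "\<forall>l\<le>Suc k. p l < n \<Longrightarrow> walk_weight D p (Suc k) \<le> max_walk n D k (p 0) (p (Suc k))"
proof (induction k)
  case 0
  then show ?case by (simp add: walk_weight_def)
next
  case (Suc k)
  have "walk_weight D p (Suc (Suc k)) = walk_weight D p (Suc k) + D (p (Suc k)) (p (Suc (Suc k)))"
    by (rule walk_weight_Suc)
  also have "\<dots> \<le> max_walk n D k (p 0) (p (Suc k)) + D (p (Suc k)) (p (Suc (Suc k)))"
    using Suc by simp
  also have "\<dots> \<le> max_walk n D (Suc k) (p 0) (p (Suc (Suc k)))"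
    using Suc.prems by (auto intro!: Max_ge)
  finally show ?case .
qed

lemma max_walk_attained:
  assumes "i < n" "j < n"
  obtains p where "\<forall>l\<le>Suc k. p l < n" "p 0 = i" "p (Suc k) = j"
    "walk_weight D p (Suc k) = max_walk n D k i j"
proof -
  have "\<exists>p. (\<forall>l\<le>Suc k. p l < n) \<and> p 0 = i \<and> p (Suc k) = j \<and> walk_weight D p (Suc k) = max_walk n D k i j"
    using assms(2)
  proof (induction k arbitrary: j)
    case 0
    show ?case
      by (rule exI[of _ "\<lambda>l. if l = 0 then i else j"]) (use assms 0 in \<open>auto simp: walk_weight_def\<close>)
  next
    case (Suc k)
    have "max_walk n D (Suc k) i j \<in> (\<lambda>l. max_walk n D k i l + D l j) ` {..<n}"
      unfolding max_walk.simps by (rule Max_in) (use assms in auto)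
    then obtain l where l: "l < n" "max_walk n D (Suc k) i j = max_walk n D k i l + D l j"
      by auto
    obtain p where p: "\<forall>t\<le>Suc k. p t < n" "p 0 = i" "p (Suc k) = l"
      "walk_weight D p (Suc k) = max_walk n D k i l"
      using Suc.IH[OF l(1)] by blast
    define q where "q = p(Suc (Suc k) := j)"
    have "walk_weight D q (Suc k) = walk_weight D p (Suc k)"
      by (rule walk_weight_cong) (simp add: q_def)
    then have "walk_weight D q (Suc (Suc k)) = max_walk n D (Suc k) i j"
      using p l by (simp add: walk_weight_Suc q_def)
    moreover have "\<forall>t\<le>Suc (Suc k). q t < n"
      using p Suc.prems by (auto simp: q_def le_Suc_eq)
    moreover have "q 0 = i" "q (Suc (Suc k)) = j"
      using p by (auto simp: q_def)
    ultimately show ?case by blast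
  qed
  then show ?thesis using that by blast
qed

lemma max_walk_superadditive:
  assumes "i < n" "l < n" "j < n"
  shows "max_walk n D a i l + max_walk n D b l j \<le> max_walk n D (Suc (a + b)) i j"
proof -
  obtain p where p: "\<forall>t\<le>Suc a. p t < n" "p 0 = i" "p (Suc a) = l"
    "walk_weight D p (Suc a) = max_walk n D a i l"
    using max_walk_attained[OF assms(1,2)] by blast
  obtain q where q: "\<forall>t\<le>Suc b. q t < n" "q 0 = l" "q (Suc b) = j"
    "walk_weight D q (Suc b) = max_walk n D b l j"
    using max_walk_attained[OF assms(2,3)] by blast
  define pq where "pq t = (if t \<le> Suc a then p t else q (t - Suc a))" for t
  have "(\<lambda>t. pq (Suc a + t)) = q"
    using p q by (auto simp: pq_def fun_eq_iff)
  moreover have "walk_weight D pq (Suc a) = walk_weight D p (Suc a)"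
    by (rule walk_weight_cong) (simp add: pq_def)
  ultimately have "walk_weight D pq (Suc (Suc (a + b))) = max_walk n D a i l + max_walk n D b l j"
    using walk_weight_add[of D pq "Suc a" "Suc b"] p q by simp
  moreover have "\<forall>t\<le>Suc (Suc (a + b)). pq t < n" "pq 0 = i" "pq (Suc (Suc (a + b))) = j"
    using p q by (auto simp: pq_def)
  ultimately show ?thesis
    using walk_weight_le_max_walk[of "Suc (a + b)" pq n D] by simp
qed

lemma max_walk_diff_const:
  assumes "n \<ge> 1"
  shows "max_walk n (\<lambda>i j. D i j - c) k i j = max_walk n D k i j - real (Suc k) * c"
proof (induction k arbitrary: j)
  case 0
  then show ?case by simp
next
  case (Suc k)
  have "(\<lambda>l. max_walk n (\<lambda>i j. D i j - c) k i l + (D l j - c))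
      = (\<lambda>l. (max_walk n D k i l + D l j) - real (Suc (Suc k)) * c)"
    using Suc.IH by (auto simp: fun_eq_iff algebra_simps)
  then have "max_walk n (\<lambda>i j. D i j - c) (Suc k) i j
      = Max ((\<lambda>x. x - real (Suc (Suc k)) * c) ` ((\<lambda>l. max_walk n D k i l + D l j) ` {..<n}))"
    by (simp only: max_walk.simps image_image)
  also have "\<dots> = Max ((\<lambda>l. max_walk n D k i l + D l j) ` {..<n}) - real (Suc (Suc k)) * c"
    by (rule mono_Max_commute[symmetric]) (use assms in \<open>auto simp: mono_def lessThan_empty_iff\<close>)
  finally show ?case by simp
qed

lemma walk_weight_shortcut:
  assumes "a \<le> b" "b \<le> m" "p a = p b"
  shows "walk_weight D p m
    = walk_weight D (\<lambda>t. if t \<le> a then p t else p (t + (b - a))) (m - (b - a))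
      + walk_weight D (\<lambda>t. p (a + t)) (b - a)"
proof -
  define q where "q t = (if t \<le> a then p t else p (t + (b - a)))" for t
  have "walk_weight D p m = walk_weight D p (a + ((b - a) + (m - b)))"
    using assms by simp
  also have "\<dots> = walk_weight D p a + walk_weight D (\<lambda>t. p (a + t)) (b - a) + walk_weight D (\<lambda>t. p (b + t)) (m - b)"
    unfolding walk_weight_add using assms by (simp add: add.assoc)
  also have "walk_weight D p a + walk_weight D (\<lambda>t. p (b + t)) (m - b) = walk_weight D q (a + (m - b))"
  proof -
    have "walk_weight D q a = walk_weight D p a" by (rule walk_weight_cong) (simp add: q_def)
    moreover have "(\<lambda>t. q (a + t)) = (\<lambda>t. p (b + t))"
      using assms unfolding q_def by (auto simp: fun_eq_iff add.commute)
    ultimately show ?thesis unfolding walk_weight_add by simp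
  qed
  moreover have "a + (m - b) = m - (b - a)" using assms by simp
  ultimately show ?thesis unfolding q_def by simp
qed

lemma pigeonhole_repeat:
  fixes p :: "nat \<Rightarrow> nat"
  assumes "\<forall>l\<le>n. p l < n"
  obtains a b where "a < b" "b \<le> n" "p a = p b"
proof -
  have "card (p ` {..n}) \<le> card {..<n}"
    using assms by (intro card_mono finite_lessThan) auto
  then have "card (p ` {..n}) < card {..n}" by simp
  then have "\<not> inj_on p {..n}" by (rule pigeonhole)
  then show ?thesis
    using that unfolding inj_on_def by (auto elim!: linorder_neqE_nat)
qed

text \<open>Without positive cycles, a long walk can be shortened by cutting out a cycle,
  which the pigeonhole principle provides.\<close>

lemma walk_weight_le_short_max_walk:
  assumes cycles: "\<forall>m<n. \<forall>i<n. max_walk n B m i i \<le> 0"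
  shows "\<forall>l\<le>Suc k. p l < n \<Longrightarrow>
    walk_weight B p (Suc k) \<le> Max ((\<lambda>m. max_walk n B m (p 0) (p (Suc k))) ` {..<n})"
proof (induction k arbitrary: p rule: less_induct)
  case (less k)
  show ?case
  proof (cases "k < n")
    case True
    have "walk_weight B p (Suc k) \<le> max_walk n B k (p 0) (p (Suc k))"
      using walk_weight_le_max_walk[OF less.prems] .
    also have "\<dots> \<le> Max ((\<lambda>m. max_walk n B m (p 0) (p (Suc k))) ` {..<n})"
      using True by (intro Max_ge) auto
    finally show ?thesis .
  next
    case False
    then obtain a b where ab: "a < b" "b \<le> n" "p a = p b"
      using pigeonhole_repeat[of n p] less.prems by auto
    then obtain c where c: "b - a = Suc c" "c < n" by (cases "b - a") auto
    have "c < k" using c False by simp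
    define q where "q t = (if t \<le> a then p t else p (t + (b - a)))" for t
    have "walk_weight B p (Suc k) = walk_weight B q (Suc (k - Suc c)) + walk_weight B (\<lambda>t. p (a + t)) (Suc c)"
      using walk_weight_shortcut[of a b "Suc k" p B] ab False c \<open>c < k\<close> unfolding q_def
      by (simp add: Suc_diff_Suc)
    moreover have "walk_weight B q (Suc (k - Suc c)) \<le> Max ((\<lambda>m. max_walk n B m (p 0) (p (Suc k))) ` {..<n})"
    proof -
      have "\<forall>l\<le>Suc (k - Suc c). q l < n" "q 0 = p 0" "q (Suc (k - Suc c)) = p (Suc k)"
        using less.prems ab False c unfolding q_def by auto
      then show ?thesis using less.IH[of "k - Suc c" q] \<open>c < k\<close> by simp
    qed
    moreover have "walk_weight B (\<lambda>t. p (a + t)) (Suc c) \<le> max_walk n B c (p a) (p a)"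
    proof -
      have "Suc (a + c) = b" using ab c by simp
      then show ?thesis
        using walk_weight_le_max_walk[of c "\<lambda>t. p (a + t)" n B] less.prems ab False by simp
    qed
    moreover have "max_walk n B c (p a) (p a) \<le> 0"
      using cycles c ab less.prems False by simp
    ultimately show ?thesis by linarith
  qed
qed

definition max_cycle_mean :: "nat \<Rightarrow> (nat \<Rightarrow> nat \<Rightarrow> real) \<Rightarrow> real" where
  "max_cycle_mean n D = Max ((\<lambda>m. Max ((\<lambda>i. max_walk n D m i i) ` {..<n}) / real (Suc m)) ` {..<n})"

lemma mp_rho_eq_max_cycle_mean:
  assumes "n \<ge> 1"
  shows "mp_rho n (\<lambda>i j. ereal (D i j)) = ereal (max_cycle_mean n D)"
proof -
  have ne: "{..<n} \<noteq> {}" using assms by (simp add: lessThan_empty_iff)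
  have inner: "Max ((\<lambda>i. mp_pow n (\<lambda>i j. ereal (D i j)) (Suc m) i i) ` {..<n}) / ereal (real (Suc m))
      = ereal (Max ((\<lambda>i. max_walk n D m i i) ` {..<n}) / real (Suc m))" for m
  proof -
    have "(\<lambda>i. mp_pow n (\<lambda>i j. ereal (D i j)) (Suc m) i i) ` {..<n}
        = ereal ` ((\<lambda>i. max_walk n D m i i) ` {..<n})"
      by (auto simp: image_image mp_pow_eq_max_walk simp del: mp_pow.simps)
    then have "Max ((\<lambda>i. mp_pow n (\<lambda>i j. ereal (D i j)) (Suc m) i i) ` {..<n})
        = ereal (Max ((\<lambda>i. max_walk n D m i i) ` {..<n}))"
      using mono_Max_commute[of ereal "(\<lambda>i. max_walk n D m i i) ` {..<n}"] ne by (simp add: mono_def)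
    then show ?thesis by simp
  qed
  have "mp_rho n (\<lambda>i j. ereal (D i j))
      = Max ((\<lambda>m. Max ((\<lambda>i. mp_pow n (\<lambda>i j. ereal (D i j)) m i i) ` {..<n}) / ereal (real m))
          ` (Suc ` {..<n}))"
    unfolding mp_rho_def by (simp add: image_Suc_lessThan)
  also have "\<dots> = Max (ereal ` ((\<lambda>m. Max ((\<lambda>i. max_walk n D m i i) ` {..<n}) / real (Suc m)) ` {..<n}))"
    by (simp only: image_image inner)
  also have "\<dots> = ereal (max_cycle_mean n D)"
    unfolding max_cycle_mean_def using mono_Max_commute[of ereal] ne by (simp add: mono_def)
  finally show ?thesis .
qed

lemma max_walk_diag_le_max_cycle_mean:
  assumes "m < n" "i < n"
  shows "max_walk n D m i i \<le> real (Suc m) * max_cycle_mean n D"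
proof -
  have "max_walk n D m i i \<le> Max ((\<lambda>i. max_walk n D m i i) ` {..<n})"
    using assms by (intro Max_ge) auto
  also have "Max ((\<lambda>i. max_walk n D m i i) ` {..<n}) / real (Suc m) \<le> max_cycle_mean n D"
    unfolding max_cycle_mean_def using assms by (intro Max_ge) auto
  then have "Max ((\<lambda>i. max_walk n D m i i) ` {..<n}) \<le> real (Suc m) * max_cycle_mean n D"
    by (simp add: divide_le_eq mult.commute)
  finally show ?thesis .
qed

lemma max_cycle_mean_attained:
  assumes "n \<ge> 1"
  obtains m i where "m < n" "i < n" "max_walk n D m i i = real (Suc m) * max_cycle_mean n D"
proof -
  have ne: "{..<n} \<noteq> {}" using assms by (simp add: lessThan_empty_iff)
  have "max_cycle_mean n D \<in> (\<lambda>m. Max ((\<lambda>i. max_walk n D m i i) ` {..<n}) / real (Suc m)) ` {..<n}"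
    unfolding max_cycle_mean_def using ne by (intro Max_in) auto
  then obtain m where m: "m < n" "max_cycle_mean n D = Max ((\<lambda>i. max_walk n D m i i) ` {..<n}) / real (Suc m)"
    by auto
  have "Max ((\<lambda>i. max_walk n D m i i) ` {..<n}) \<in> (\<lambda>i. max_walk n D m i i) ` {..<n}"
    using ne by (intro Max_in) auto
  then obtain i where "i < n" "Max ((\<lambda>i. max_walk n D m i i) ` {..<n}) = max_walk n D m i i"
    by auto
  with m that show ?thesis by simp
qed

text \<open>The vector \<open>v\<close> is the row maximum of the Kleene star of \<open>D - \<rho>\<close>, which exists since
  \<open>D - \<rho>\<close> has no positive cycle.\<close>

lemma subeigenvector_exists:
  assumes "n \<ge> 1"
  obtains v where "\<forall>l<n. \<forall>j<n. D l j + v j \<le> max_cycle_mean n D + v l"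
proof -
  define B where "B = (\<lambda>i j. D i j - max_cycle_mean n D)"
  have cycles: "\<forall>m<n. \<forall>i<n. max_walk n B m i i \<le> 0"
    using max_walk_diag_le_max_cycle_mean[of _ n _ D]
    unfolding B_def max_walk_diff_const[OF assms] by auto
  define V where "V i j = Max ((\<lambda>m. max_walk n B m i j) ` {..<n})" for i j
  define v where "v l = Max ((\<lambda>j. V l j) ` {..<n})" for l
  have "B l j + v j \<le> v l" if lj: "l < n" "j < n" for l j
  proof -
    have "v j \<in> (\<lambda>j'. V j j') ` {..<n}" unfolding v_def by (rule Max_in) (use lj in auto)
    then obtain j' where j': "j' < n" "v j = V j j'" by auto
    have "V j j' \<in> (\<lambda>m. max_walk n B m j j') ` {..<n}" unfolding V_def by (rule Max_in) (use lj in auto)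
    then obtain m where m: "m < n" "V j j' = max_walk n B m j j'" by auto
    have "B l j + v j = max_walk n B 0 l j + max_walk n B m j j'" using j' m by simp
    also have "\<dots> \<le> max_walk n B (Suc m) l j'"
      using max_walk_superadditive[OF lj j'(1), of B 0 m] by simp
    also have "\<dots> \<le> V l j'"
    proof -
      obtain p where "\<forall>t\<le>Suc (Suc m). p t < n" "p 0 = l" "p (Suc (Suc m)) = j'"
          "walk_weight B p (Suc (Suc m)) = max_walk n B (Suc m) l j'"
        using max_walk_attained[OF lj(1) j'(1)] by blast
      then show ?thesis using walk_weight_le_short_max_walk[OF cycles] unfolding V_def by metis
    qed
    also have "\<dots> \<le> v l" unfolding v_def using j' by (intro Max_ge) auto
    finally show ?thesis .
  qed
  then have "\<forall>l<n. \<forall>j<n. D l j + v j \<le> max_cycle_mean n D + v l"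
    unfolding B_def by (auto simp: algebra_simps)
  then show ?thesis by (rule that)
qed

lemma max_walk_le_subeigenvector:
  assumes v: "\<forall>l<n. \<forall>j<n. D l j + v j \<le> r + v l" and "i < n" "j < n"
  shows "max_walk n D k i j + v j \<le> real (Suc k) * r + v i"
  using assms(3)
proof (induction k arbitrary: j)
  case 0
  then show ?case using v \<open>i < n\<close> by simp
next
  case (Suc k)
  have "max_walk n D k i l + D l j \<le> real (Suc (Suc k)) * r + v i - v j" if "l < n" for l
    using Suc.IH[OF that] v that Suc.prems by (fastforce simp: algebra_simps)
  then have "Max ((\<lambda>l. max_walk n D k i l + D l j) ` {..<n}) \<le> real (Suc (Suc k)) * r + v i - v j"
    using \<open>i < n\<close> by (subst Max_le_iff) auto
  then show ?case by simp
qed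

lemma max_walk_diag_ge:
  assumes "i < n"
  shows "real (Suc k) * D i i \<le> max_walk n D k i i"
proof (induction k)
  case 0
  then show ?case by simp
next
  case (Suc k)
  have "max_walk n D k i i + max_walk n D 0 i i \<le> max_walk n D (Suc k) i i"
    using max_walk_superadditive[OF assms assms assms, of D k 0] by simp
  then show ?case using Suc by (simp add: algebra_simps)
qed

text \<open>Repeating a critical cycle through \<open>i\<close>, padded with loops at \<open>i\<close>.\<close>

lemma max_walk_linear_lower_bound:
  assumes "n \<ge> 1"
  obtains i C where "i < n" "\<And>k. real (Suc k) * max_cycle_mean n D - C \<le> max_walk n D k i i"
proof -
  define r where "r = max_cycle_mean n D"
  obtain m i where m: "m < n" and i: "i < n" and critical: "max_walk n D m i i = real (Suc m) * r"
    using max_cycle_mean_attained[OF assms] unfolding r_def by blast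
  define C where "C = real (Suc m) * \<bar>r - D i i\<bar>"
  have "real (Suc k) * r - C \<le> max_walk n D k i i" for k
  proof (induction k rule: less_induct)
    case (less k)
    show ?case
    proof (cases "k \<le> m")
      case True
      have "real (Suc k) * (r - \<bar>r - D i i\<bar>) \<le> real (Suc k) * D i i"
        by (intro mult_left_mono) auto
      moreover have "real (Suc k) * \<bar>r - D i i\<bar> \<le> C"
        unfolding C_def using True by (intro mult_right_mono) auto
      ultimately show ?thesis
        using max_walk_diag_ge[OF i, of k D] by (simp add: right_diff_distrib)
    next
      case False
      define k' where "k' = k - Suc m"
      have k': "k' < k" "k = Suc (m + k')" using False unfolding k'_def by auto
      have "max_walk n D m i i + max_walk n D k' i i \<le> max_walk n D k i i"
        using max_walk_superadditive[OF i i i, of D m k'] k' by simp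
      moreover have "real (Suc k) = real (Suc m) + real (Suc k')" using k' by simp
      ultimately show ?thesis using less.IH[OF k'(1)] critical by (simp add: algebra_simps)
    qed
  qed
  with i that show ?thesis unfolding r_def by blast
qed

section \<open>Deterministic growth rates\<close>

text \<open>An upper bound for the first row of \<open>A(1) \<otimes> \<dots> \<otimes> A(k)\<close>; its recursion mirrors the
  product: a path either leaves the first row at step \<open>k\<close> (through \<open>T(k)\<close>, bounded by \<open>\<tau> k\<close>),
  or earlier and then takes one more step in \<open>D\<close> (gaining at most \<open>r\<close>).\<close>

fun row_bound :: "(nat \<Rightarrow> real) \<Rightarrow> (nat \<Rightarrow> real) \<Rightarrow> real \<Rightarrow> real \<Rightarrow> nat \<Rightarrow> real" where
  "row_bound a \<tau> r c 0 = 0"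
| "row_bound a \<tau> r c (Suc k) = max ((\<Sum>l<k. a (Suc l)) + \<tau> (Suc k) + c) (row_bound a \<tau> r c k + r)"

lemma running_max_abs_over_n_tendsto_0:
  fixes x :: "nat \<Rightarrow> real"
  assumes "(\<lambda>k. x k / real k) \<longlonglongrightarrow> 0"
  shows "(\<lambda>k. Max ((\<lambda>l. \<bar>x l\<bar>) ` {..k}) / real k) \<longlonglongrightarrow> 0"
proof (rule LIMSEQ_I)
  fix e :: real
  assume e: "0 < e"
  obtain L where L: "\<forall>l\<ge>L. \<bar>x l / real l\<bar> < e / 2"
    using LIMSEQ_D[OF assms, of "e/2"] e by auto
  define K where "K = Max ((\<lambda>l. \<bar>x l\<bar>) ` {..L})"
  have K: "\<bar>x l\<bar> \<le> K" if "l \<le> L" for l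
    unfolding K_def using that by (intro Max_ge) auto
  then have K_nonneg: "0 \<le> K" by (meson abs_ge_zero order_trans zero_le)
  obtain L' where L': "\<forall>k\<ge>L'. \<bar>K / real k\<bar> < e / 2"
    using LIMSEQ_D[OF lim_const_over_n[of K], of "e/2"] e by auto
  show "\<exists>k0. \<forall>k\<ge>k0. norm (Max ((\<lambda>l. \<bar>x l\<bar>) ` {..k}) / real k - 0) < e"
  proof (intro exI[of _ "max (max L L') 1"] allI impI)
    fix k
    assume k: "max (max L L') 1 \<le> k"
    then have k_pos: "real k > 0" by auto
    let ?M = "Max ((\<lambda>l. \<bar>x l\<bar>) ` {..k})"
    have "\<bar>x l\<bar> \<le> K + e / 2 * real k" if "l \<le> k" for l
    proof (cases "l \<le> L")
      case True
      then show ?thesis using K[of l] e by (simp add: add_increasing2)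
    next
      case False
      then have "\<bar>x l\<bar> < e / 2 * real l"
        using L by (simp add: abs_div divide_less_eq)
      also have "\<dots> \<le> e / 2 * real k" using that e by (intro mult_left_mono) auto
      finally show ?thesis using K_nonneg by simp
    qed
    then have "?M \<le> K + e / 2 * real k" by (intro Max.boundedI) auto
    then have "?M / real k \<le> K / real k + e / 2"
      using k_pos by (simp add: divide_le_eq add_divide_distrib algebra_simps)
    moreover have "K / real k < e / 2" using L' k K_nonneg by auto
    ultimately have "?M / real k < e" by linarith
    moreover have "0 \<le> ?M" by (rule order_trans[OF _ Max_ge[of _ "\<bar>x 0\<bar>"]]) auto
    ultimately show "norm (?M / real k - 0) < e" using k_pos by simp
  qed
qed

lemma term_over_n_tendsto_0_of_averages:
  fixes x :: "nat \<Rightarrow> real"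
  assumes "(\<lambda>k. (\<Sum>l<k. x (Suc l)) / real k) \<longlonglongrightarrow> \<nu>"
  shows "(\<lambda>k. x k / real k) \<longlonglongrightarrow> 0"
proof -
  define s where "s k = (\<Sum>l<k. x (Suc l))" for k
  have "x (Suc k) / real (Suc k) = s (Suc k) / real (Suc k) - (real k / real (Suc k)) * (s k / real k)" for k
    by (cases "k = 0") (simp_all add: s_def diff_divide_distrib[symmetric])
  moreover have "(\<lambda>k. s (Suc k) / real (Suc k) - (real k / real (Suc k)) * (s k / real k)) \<longlonglongrightarrow> \<nu> - 1 * \<nu>"
    using assms unfolding s_def[symmetric] by (intro tendsto_intros LIMSEQ_n_over_Suc_n LIMSEQ_Suc)
  ultimately have "(\<lambda>k. x (Suc k) / real (Suc k)) \<longlonglongrightarrow> 0" by simp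
  then show ?thesis by (rule LIMSEQ_imp_Suc)
qed

lemma row_bound_le_running_max:
  assumes "r \<le> \<gamma>" "\<mu> \<le> \<gamma>" "0 \<le> \<gamma>"
  shows "row_bound a \<tau> r c k \<le> real k * \<gamma> + \<bar>c\<bar> + Max ((\<lambda>l. \<bar>(\<Sum>i<l. a (Suc i)) - real l * \<mu>\<bar>) ` {..k})
           + Max ((\<lambda>l. \<bar>\<tau> l\<bar>) ` {..k})"
proof (induction k)
  case 0
  then show ?case by simp
next
  case (Suc k)
  let ?E = "\<lambda>k. Max ((\<lambda>l. \<bar>(\<Sum>i<l. a (Suc i)) - real l * \<mu>\<bar>) ` {..k})"
  let ?F = "\<lambda>k. Max ((\<lambda>l. \<bar>\<tau> l\<bar>) ` {..k})"
  have E: "\<bar>(\<Sum>i<k. a (Suc i)) - real k * \<mu>\<bar> \<le> ?E (Suc k)" "?E k \<le> ?E (Suc k)"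
    by (intro Max_ge Max_mono; auto)+
  have F: "\<bar>\<tau> (Suc k)\<bar> \<le> ?F (Suc k)" "?F k \<le> ?F (Suc k)"
    by (intro Max_ge Max_mono; auto)+
  have "real k * \<mu> \<le> real k * \<gamma>" using assms by (intro mult_left_mono) auto
  moreover have "real (Suc k) * \<gamma> = real k * \<gamma> + \<gamma>" by (simp add: algebra_simps)
  moreover have "(\<Sum>i<k. a (Suc i)) - real k * \<mu> \<le> \<bar>(\<Sum>i<k. a (Suc i)) - real k * \<mu>\<bar>"
    "\<tau> (Suc k) \<le> \<bar>\<tau> (Suc k)\<bar>" "c \<le> \<bar>c\<bar>" by simp_all
  ultimately show ?case using Suc E F assms by (simp only: row_bound.simps max.bounded_iff) linarith
qed

lemma row_bound_le_linear:
  fixes a \<tau> :: "nat \<Rightarrow> real"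
  assumes sums: "(\<lambda>k. (\<Sum>l<k. a (Suc l)) / real k) \<longlonglongrightarrow> \<mu>"
    and \<tau>: "(\<lambda>k. \<tau> k / real k) \<longlonglongrightarrow> 0"
    and r: "0 \<le> r"
  obtains \<epsilon> where "\<epsilon> \<longlonglongrightarrow> 0" "\<And>k. k \<ge> 1 \<Longrightarrow> row_bound a \<tau> r c k \<le> real k * (max \<mu> r + \<epsilon> k)"
proof -
  define E where "E k = Max ((\<lambda>l. \<bar>(\<Sum>i<l. a (Suc i)) - real l * \<mu>\<bar>) ` {..k})" for k
  define F where "F k = Max ((\<lambda>l. \<bar>\<tau> l\<bar>) ` {..k})" for k
  have "(\<lambda>k. ((\<Sum>l<k. a (Suc l)) - real k * \<mu>) / real k) \<longlonglongrightarrow> \<mu> - \<mu>"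
  proof (rule Lim_transform_eventually)
    show "(\<lambda>k. (\<Sum>l<k. a (Suc l)) / real k - \<mu>) \<longlonglongrightarrow> \<mu> - \<mu>" using sums by (intro tendsto_intros)
    show "\<forall>\<^sub>F k in sequentially. (\<Sum>l<k. a (Suc l)) / real k - \<mu> = ((\<Sum>l<k. a (Suc l)) - real k * \<mu>) / real k"
      using eventually_gt_at_top[of 0] by eventually_elim (simp add: field_simps)
  qed
  then have "(\<lambda>k. E k / real k) \<longlonglongrightarrow> 0"
    unfolding E_def by (intro running_max_abs_over_n_tendsto_0) simp
  moreover have "(\<lambda>k. F k / real k) \<longlonglongrightarrow> 0"
    unfolding F_def using \<tau> by (rule running_max_abs_over_n_tendsto_0)
  ultimately have "(\<lambda>k. \<bar>c\<bar> / real k + E k / real k + F k / real k) \<longlonglongrightarrow> 0 + 0 + 0"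
    by (intro tendsto_intros)
  moreover have "row_bound a \<tau> r c k \<le> real k * (max \<mu> r + (\<bar>c\<bar> / real k + E k / real k + F k / real k))"
    if "k \<ge> 1" for k
    using row_bound_le_running_max[of r "max \<mu> r" \<mu> a \<tau> c k] r that
    unfolding E_def F_def by (simp add: algebra_simps)
  ultimately show ?thesis using that by simp
qed

lemma growth_rate_tendsto_of_bounds:
  fixes N a \<tau> :: "nat \<Rightarrow> real"
  assumes bounds: "\<And>k. k \<ge> 1 \<Longrightarrow> (\<Sum>l<k. a (Suc l)) \<le> N k \<and> real k * r - C \<le> N k \<and>
                N k \<le> max (\<Sum>l<k. a (Suc l)) (max (real k * r + c - c') (row_bound a \<tau> r c k - c'))"
    and sums: "(\<lambda>k. (\<Sum>l<k. a (Suc l)) / real k) \<longlonglongrightarrow> \<mu>"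
    and \<tau>: "(\<lambda>k. \<tau> k / real k) \<longlonglongrightarrow> 0"
    and r: "0 \<le> r"
  shows "(\<lambda>k. N k / real k) \<longlonglongrightarrow> max \<mu> r"
proof -
  obtain \<epsilon> where \<epsilon>: "\<epsilon> \<longlonglongrightarrow> 0" and row: "\<And>k. k \<ge> 1 \<Longrightarrow> row_bound a \<tau> r c k \<le> real k * (max \<mu> r + \<epsilon> k)"
    using row_bound_le_linear[OF sums \<tau> r] by blast
  define S where "S k = (\<Sum>l<k. a (Suc l)) / real k" for k
  define L where "L k = max (S k) (r - C / real k)" for k
  define U where "U k = max (S k) (max (r + c / real k - c' / real k) (max \<mu> r + \<epsilon> k - c' / real k))" for k
  have "L \<longlonglongrightarrow> max \<mu> (r - 0)"
    unfolding L_def S_def by (intro tendsto_intros sums)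
  then have L: "L \<longlonglongrightarrow> max \<mu> r" by simp
  have "U \<longlonglongrightarrow> max \<mu> (max (r + 0 - 0) (max \<mu> r + 0 - 0))"
    unfolding U_def S_def by (intro tendsto_intros sums \<epsilon>)
  then have U: "U \<longlonglongrightarrow> max \<mu> r" by simp
  have "\<forall>\<^sub>F k in sequentially. L k \<le> N k / real k \<and> N k / real k \<le> U k"
    using eventually_ge_at_top[of 1]
  proof eventually_elim
    case (elim k)
    then have k: "real k > 0" "real k \<noteq> 0" by auto
    have "real k * U k = max (\<Sum>l<k. a (Suc l)) (max (real k * r + c - c') (real k * (max \<mu> r + \<epsilon> k) - c'))"
      using k unfolding U_def S_def by (simp add: max_mult_distrib_left right_diff_distrib distrib_left)
    then have "N k \<le> real k * U k"
      using bounds[OF elim] row[OF elim] by (auto simp: le_max_iff_disj)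
    moreover have "real k * L k = max (\<Sum>l<k. a (Suc l)) (real k * r - C)"
      using k unfolding L_def S_def by (simp add: max_mult_distrib_left right_diff_distrib)
    then have "real k * L k \<le> N k"
      using bounds[OF elim] by simp
    ultimately show ?case using k by (simp add: field_simps)
  qed
  then have "\<forall>\<^sub>F k in sequentially. L k \<le> N k / real k" "\<forall>\<^sub>F k in sequentially. N k / real k \<le> U k"
    by (simp_all add: eventually_conj_iff)
  from tendsto_sandwich[OF this L U] show ?thesis .
qed

lemma row_bound_le_abs:
  "row_bound a \<tau> r c k \<le> real k * (\<bar>r\<bar> + \<bar>c\<bar>) + (\<Sum>l<k. \<bar>a (Suc l)\<bar>) + (\<Sum>l<k. \<bar>\<tau> (Suc l)\<bar>)"
proof (induction k)
  case 0
  then show ?case by simp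
next
  case (Suc k)
  have "(\<Sum>l<k. a (Suc l)) \<le> (\<Sum>l<k. \<bar>a (Suc l)\<bar>)" by (intro sum_mono) auto
  moreover have "0 \<le> real k * (\<bar>r\<bar> + \<bar>c\<bar>)" "0 \<le> (\<Sum>l<k. \<bar>a (Suc l)\<bar>)" "0 \<le> (\<Sum>l<k. \<bar>\<tau> (Suc l)\<bar>)"
    by (auto intro: sum_nonneg)
  moreover have "real (Suc k) * (\<bar>r\<bar> + \<bar>c\<bar>) = real k * (\<bar>r\<bar> + \<bar>c\<bar>) + \<bar>r\<bar> + \<bar>c\<bar>"
    by (simp add: algebra_simps)
  moreover have "\<tau> (Suc k) \<le> \<bar>\<tau> (Suc k)\<bar>" "c \<le> \<bar>c\<bar>" "r \<le> \<bar>r\<bar>" "0 \<le> \<bar>a (Suc k)\<bar>" by auto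
  ultimately show ?case using Suc by (simp only: row_bound.simps max.bounded_iff sum.lessThan_Suc) linarith
qed

section \<open>Products of the block-triangular matrices\<close>

lemma ereal_add_minf_not_pinf: "(x::ereal) \<noteq> \<infinity> \<Longrightarrow> x + -\<infinity> = -\<infinity>" "(x::ereal) \<noteq> \<infinity> \<Longrightarrow> -\<infinity> + x = -\<infinity>"
  by (cases x; simp)+

lemma mp_norm_eq_Max_image: "mp_norm N A = Max ((\<lambda>(i, j). A i j) ` ({..<N} \<times> {..<N}))"
  unfolding mp_norm_def by (rule arg_cong[where f = Max]) auto

locale block_product =
  fixes n :: nat and D :: "nat \<Rightarrow> nat \<Rightarrow> real" and a :: "nat \<Rightarrow> real" and t :: "nat \<Rightarrow> nat \<Rightarrow> ereal"
  assumes n_pos: "n \<ge> 1"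
    and t_not_pinf: "\<And>k j. k \<ge> 1 \<Longrightarrow> j < n \<Longrightarrow> t k j \<noteq> \<infinity>"
begin

abbreviation A :: "nat \<Rightarrow> nat \<Rightarrow> nat \<Rightarrow> ereal" where
  "A k \<equiv> Amat n D (a k) (t k)"

abbreviation Aprod :: "nat \<Rightarrow> nat \<Rightarrow> nat \<Rightarrow> ereal" where
  "Aprod k \<equiv> mp_prod (Suc n) (\<lambda>k. Amat n D (a k) (t k)) k"

lemma Aprod_Suc_entry: "Aprod (Suc k) i j = Max ((\<lambda>l. Aprod k i l + A (Suc k) l j) ` {..<Suc n})"
  by (simp add: mp_mult_def)

lemma Aprod_not_pinf: "j < Suc n \<Longrightarrow> Aprod k i j \<noteq> \<infinity>"
proof (induction k arbitrary: j)
  case 0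
  then show ?case by (simp add: mp_id_def)
next
  case (Suc k)
  have "Aprod (Suc k) i j \<in> (\<lambda>l. Aprod k i l + A (Suc k) l j) ` {..<Suc n}"
    unfolding Aprod_Suc_entry by (rule Max_in) auto
  then obtain l where "l < Suc n" "Aprod (Suc k) i j = Aprod k i l + A (Suc k) l j"
    by auto
  moreover have "A (Suc k) l j \<noteq> \<infinity>"
    using t_not_pinf Suc.prems by (auto simp: Amat_def)
  ultimately show ?case using Suc.IH by auto
qed

lemma Aprod_corner: "Aprod k 0 0 = ereal (\<Sum>l<k. a (Suc l))"
proof (induction k)
  case 0
  then show ?case by (simp add: mp_id_def)
next
  case (Suc k)
  have "Max ((\<lambda>l. Aprod k 0 l + A (Suc k) l 0) ` {..<Suc n}) = ereal (\<Sum>l<Suc k. a (Suc l))"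
  proof (rule Max_eqI)
    fix y
    assume "y \<in> (\<lambda>l. Aprod k 0 l + A (Suc k) l 0) ` {..<Suc n}"
    then obtain l where "l < Suc n" "y = Aprod k 0 l + A (Suc k) l 0" by auto
    then show "y \<le> ereal (\<Sum>l<Suc k. a (Suc l))"
      using Suc Aprod_not_pinf[of l k 0] by (cases "l = 0") (auto simp: Amat_def ereal_add_minf_not_pinf)
  next
    show "ereal (\<Sum>l<Suc k. a (Suc l)) \<in> (\<lambda>l. Aprod k 0 l + A (Suc k) l 0) ` {..<Suc n}"
      using Suc by (intro image_eqI[of _ _ 0]) (auto simp: Amat_def)
  qed simp
  then show ?case by (simp add: mp_mult_def)
qed

lemma Aprod_first_column: "i < n \<Longrightarrow> Aprod k (Suc i) 0 = -\<infinity>"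
proof (induction k)
  case 0
  then show ?case by (simp add: mp_id_def)
next
  case (Suc k)
  have "Max ((\<lambda>l. Aprod k (Suc i) l + A (Suc k) l 0) ` {..<Suc n}) = -\<infinity>"
  proof (rule Max_eqI)
    fix y
    assume "y \<in> (\<lambda>l. Aprod k (Suc i) l + A (Suc k) l 0) ` {..<Suc n}"
    then obtain l where "l < Suc n" "y = Aprod k (Suc i) l + A (Suc k) l 0" by auto
    then show "y \<le> -\<infinity>"
      using Suc Aprod_not_pinf[of l k "Suc i"] by (cases "l = 0") (auto simp: Amat_def ereal_add_minf_not_pinf)
  qed (use Suc in \<open>auto simp: Amat_def\<close>)
  then show ?case by (simp add: mp_mult_def)
qed

lemma Aprod_lower_block: "i < n \<Longrightarrow> j < n \<Longrightarrow> Aprod (Suc k) (Suc i) (Suc j) = ereal (max_walk n D k i j)"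
proof (induction k arbitrary: j)
  case 0
  have "Max ((\<lambda>l. mp_id (Suc i) l + A 1 l (Suc j)) ` {..<Suc n}) = ereal (D i j)"
  proof (rule Max_eqI)
    fix y
    assume "y \<in> (\<lambda>l. mp_id (Suc i) l + A 1 l (Suc j)) ` {..<Suc n}"
    then obtain l where "l < Suc n" "y = mp_id (Suc i) l + A 1 l (Suc j)" by auto
    moreover have "A 1 l (Suc j) \<noteq> \<infinity>" using t_not_pinf 0 by (auto simp: Amat_def)
    ultimately show "y \<le> ereal (D i j)"
      by (cases "l = Suc i") (auto simp: Amat_def mp_id_def ereal_add_minf_not_pinf)
  next
    show "ereal (D i j) \<in> (\<lambda>l. mp_id (Suc i) l + A 1 l (Suc j)) ` {..<Suc n}"
      using 0 by (intro image_eqI[of _ _ "Suc i"]) (auto simp: Amat_def mp_id_def)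
  qed simp
  then show ?case by (simp add: mp_mult_def)
next
  case (Suc k)
  have "Max ((\<lambda>l. Aprod (Suc k) (Suc i) l + A (Suc (Suc k)) l (Suc j)) ` {..<Suc n})
      = ereal (max_walk n D (Suc k) i j)"
  proof (rule Max_eqI)
    fix y
    assume "y \<in> (\<lambda>l. Aprod (Suc k) (Suc i) l + A (Suc (Suc k)) l (Suc j)) ` {..<Suc n}"
    then obtain l where l: "l < Suc n" "y = Aprod (Suc k) (Suc i) l + A (Suc (Suc k)) l (Suc j)"
      by auto
    show "y \<le> ereal (max_walk n D (Suc k) i j)"
    proof (cases l)
      case 0
      moreover have "A (Suc (Suc k)) 0 (Suc j) \<noteq> \<infinity>" using t_not_pinf Suc.prems by (simp add: Amat_def)
      ultimately show ?thesis
        using l Suc.prems Aprod_first_column by (simp add: ereal_add_minf_not_pinf del: mp_prod.simps)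
    next
      case (Suc l')
      then have "y = ereal (max_walk n D k i l' + D l' j)"
        using l Suc.prems Suc.IH[of l'] by (simp add: Amat_def del: mp_prod.simps)
      also have "\<dots> \<le> ereal (max_walk n D (Suc k) i j)"
        using l Suc by (auto intro!: Max_ge)
      finally show ?thesis .
    qed
  next
    have "max_walk n D (Suc k) i j \<in> (\<lambda>l. max_walk n D k i l + D l j) ` {..<n}"
      unfolding max_walk.simps using n_pos by (intro Max_in) (auto simp: lessThan_empty_iff)
    then obtain l where "l < n" "max_walk n D (Suc k) i j = max_walk n D k i l + D l j"
      by auto
    then show "ereal (max_walk n D (Suc k) i j)
        \<in> (\<lambda>l. Aprod (Suc k) (Suc i) l + A (Suc (Suc k)) l (Suc j)) ` {..<Suc n}"
      using Suc.prems Suc.IH[of l] by (intro image_eqI[of _ _ "Suc l"]) (auto simp: Amat_def simp del: mp_prod.simps)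
  qed simp
  then show ?case by (simp add: mp_mult_def)
qed

abbreviation Anorm :: "nat \<Rightarrow> real" where
  "Anorm k \<equiv> real_of_ereal (mp_norm (Suc n) (Aprod k))"

lemma Aprod_entry_le_norm: "i < Suc n \<Longrightarrow> j < Suc n \<Longrightarrow> Aprod k i j \<le> mp_norm (Suc n) (Aprod k)"
  unfolding mp_norm_eq_Max_image by (rule Max_ge) auto

lemma sum_le_norm_Aprod: "ereal (\<Sum>l<k. a (Suc l)) \<le> mp_norm (Suc n) (Aprod k)"
  using Aprod_entry_le_norm[of 0 0 k] by (simp add: Aprod_corner)

lemma ereal_Anorm: "ereal (Anorm k) = mp_norm (Suc n) (Aprod k)"
proof -
  have "mp_norm (Suc n) (Aprod k) \<in> (\<lambda>(i, j). Aprod k i j) ` ({..<Suc n} \<times> {..<Suc n})"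
    unfolding mp_norm_eq_Max_image by (rule Max_in) auto
  then have "mp_norm (Suc n) (Aprod k) \<noteq> \<infinity>" using Aprod_not_pinf by (auto simp: eq_commute[of \<infinity>])
  moreover have "mp_norm (Suc n) (Aprod k) \<noteq> -\<infinity>" using sum_le_norm_Aprod[of k] by auto
  ultimately show ?thesis by (cases "mp_norm (Suc n) (Aprod k)") auto
qed

lemma sum_le_Anorm: "(\<Sum>l<k. a (Suc l)) \<le> Anorm k"
proof -
  have "ereal (\<Sum>l<k. a (Suc l)) \<le> ereal (Anorm k)"
    unfolding ereal_Anorm by (rule sum_le_norm_Aprod)
  then show ?thesis by simp
qed

lemma max_walk_le_Anorm:
  assumes "i < n"
  shows "max_walk n D k i i \<le> Anorm (Suc k)"
proof -
  have "ereal (max_walk n D k i i) \<le> ereal (Anorm (Suc k))"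
    unfolding ereal_Anorm Aprod_lower_block[OF assms assms, symmetric]
    by (rule Aprod_entry_le_norm) (use assms in auto)
  then show ?thesis by simp
qed

context
  fixes v :: "nat \<Rightarrow> real" and r c c' :: real and \<tau> :: "nat \<Rightarrow> real"
  assumes subeigen: "\<forall>l<n. \<forall>j<n. D l j + v j \<le> r + v l"
    and v_le: "\<forall>j<n. v j \<le> c" and v_ge: "\<forall>j<n. c' \<le> v j"
    and t_le: "\<forall>k\<ge>1. \<forall>j<n. t k j \<le> ereal (\<tau> k)"
begin

lemma Aprod_first_row_le: "j < n \<Longrightarrow> Aprod k 0 (Suc j) \<le> ereal (row_bound a \<tau> r c k - v j)"
proof (induction k arbitrary: j)
  case 0
  then show ?case by (simp add: mp_id_def)
next
  case (Suc k)
  have bound: "y \<le> ereal (row_bound a \<tau> r c (Suc k) - v j)"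
    if y: "y \<in> (\<lambda>l. Aprod k 0 l + A (Suc k) l (Suc j)) ` {..<Suc n}" for y
  proof -
    obtain l where l: "l < Suc n" "y = Aprod k 0 l + A (Suc k) l (Suc j)"
      using y by auto
    show ?thesis
    proof (cases l)
      case 0
      moreover have "A (Suc k) 0 (Suc j) = t (Suc k) j" by (simp add: Amat_def)
      ultimately have "y = ereal (\<Sum>l<k. a (Suc l)) + t (Suc k) j"
        using l by (simp add: Aprod_corner)
      also have "\<dots> \<le> ereal (\<Sum>l<k. a (Suc l)) + ereal (\<tau> (Suc k))"
        using t_le Suc.prems by (intro add_left_mono) auto
      also have "\<dots> \<le> ereal (row_bound a \<tau> r c (Suc k) - v j)"
        using v_le Suc.prems by auto
      finally show ?thesis .
    next
      case (Suc l')
      then have "y = Aprod k 0 (Suc l') + ereal (D l' j)"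
        using l by (simp add: Amat_def)
      also have "\<dots> \<le> ereal (row_bound a \<tau> r c k - v l') + ereal (D l' j)"
        using Suc.IH[of l'] l Suc by (intro add_right_mono) auto
      also have "\<dots> \<le> ereal (row_bound a \<tau> r c (Suc k) - v j)"
        using subeigen l Suc Suc.prems by fastforce
      finally show ?thesis .
    qed
  qed
  show ?case
    unfolding Aprod_Suc_entry
    by (rule Max.boundedI) (simp, simp add: lessThan_empty_iff, erule bound)
qed

lemma norm_Aprod_le:
  "mp_norm (Suc n) (Aprod (Suc k)) \<le> ereal (max (\<Sum>l<Suc k. a (Suc l))
      (max (real (Suc k) * r + c - c') (row_bound a \<tau> r c (Suc k) - c')))"
  (is "_ \<le> ereal ?U")
proof -
  have "Aprod (Suc k) i j \<le> ereal ?U" if "i < Suc n" "j < Suc n" for i j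
  proof (cases i; cases j)
    fix j'
    assume "i = 0" "j = Suc j'"
    then have "Aprod (Suc k) i j \<le> ereal (row_bound a \<tau> r c (Suc k) - v j')"
      using Aprod_first_row_le[of j' "Suc k"] that by (simp del: mp_prod.simps row_bound.simps)
    moreover have "row_bound a \<tau> r c (Suc k) - v j' \<le> ?U"
      using v_ge that \<open>j = Suc j'\<close> by (simp del: row_bound.simps add: le_max_iff_disj)
    ultimately show ?thesis by (meson ereal_less_eq(3) order_trans)
  next
    fix i' j'
    assume "i = Suc i'" "j = Suc j'"
    then have "Aprod (Suc k) i j = ereal (max_walk n D k i' j')"
      using Aprod_lower_block that by (simp del: mp_prod.simps)
    moreover have "max_walk n D k i' j' \<le> ?U"
    proof -
      have "i' < n" "j' < n" using that \<open>i = Suc i'\<close> \<open>j = Suc j'\<close> by auto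
      then have "max_walk n D k i' j' \<le> real (Suc k) * r + c - c'"
        using max_walk_le_subeigenvector[OF subeigen, of i' j' k] v_le v_ge by fastforce
      then show ?thesis by (simp del: row_bound.simps add: le_max_iff_disj)
    qed
    ultimately show ?thesis by (simp only: ereal_less_eq)
  qed (use that in \<open>auto simp: Aprod_corner Aprod_first_column simp del: mp_prod.simps\<close>)
  then show ?thesis
    unfolding mp_norm_eq_Max_image by (intro Max.boundedI) (auto simp del: mp_prod.simps)
qed

lemma Anorm_le:
  assumes "k \<ge> 1"
  shows "Anorm k \<le> max (\<Sum>l<k. a (Suc l)) (max (real k * r + c - c') (row_bound a \<tau> r c k - c'))"
proof -
  obtain k' where "k = Suc k'" using assms by (cases k) auto
  then have "ereal (Anorm k)
      \<le> ereal (max (\<Sum>l<k. a (Suc l)) (max (real k * r + c - c') (row_bound a \<tau> r c k - c')))"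
    unfolding ereal_Anorm using norm_Aprod_le[of k'] by simp
  then show ?thesis by (simp only: ereal_less_eq)
qed

lemma abs_Anorm_le:
  assumes "k \<ge> 1"
  shows "\<bar>Anorm k\<bar> \<le> (\<Sum>l<k. \<bar>a (Suc l)\<bar>) + (\<Sum>l<k. \<bar>\<tau> (Suc l)\<bar>) + real k * (\<bar>r\<bar> + 2 * \<bar>c\<bar> + \<bar>c'\<bar>)"
    (is "_ \<le> ?A + ?T + real k * _")
proof -
  have kr: "real k * r \<le> real k * \<bar>r\<bar>" by (intro mult_left_mono) auto
  have sums: "\<bar>\<Sum>l<k. a (Suc l)\<bar> \<le> ?A" "0 \<le> ?T" "0 \<le> real k * \<bar>r\<bar>" "0 \<le> real k * \<bar>c\<bar>" "0 \<le> real k * \<bar>c'\<bar>"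
    by (auto intro: sum_abs sum_nonneg)
  have B: "?A + ?T + real k * (\<bar>r\<bar> + 2 * \<bar>c\<bar> + \<bar>c'\<bar>) = ?A + ?T + real k * \<bar>r\<bar> + 2 * (real k * \<bar>c\<bar>) + real k * \<bar>c'\<bar>"
    by (simp add: algebra_simps)
  have "row_bound a \<tau> r c k - c' \<le> ?A + ?T + real k * \<bar>r\<bar> + real k * \<bar>c\<bar> + \<bar>c'\<bar>"
    using row_bound_le_abs[of a \<tau> r c k] by (simp add: algebra_simps)
  moreover have "Anorm k \<le> max (\<Sum>l<k. a (Suc l)) (max (real k * r + c - c') (row_bound a \<tau> r c k - c'))"
    by (rule Anorm_le[OF assms])
  moreover have "(\<Sum>l<k. a (Suc l)) \<le> Anorm k" by (rule sum_le_Anorm)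
  moreover have "c \<le> \<bar>c\<bar>" "- c' \<le> \<bar>c'\<bar>" "\<bar>c'\<bar> \<le> real k * \<bar>c'\<bar>" "\<bar>c\<bar> \<le> real k * \<bar>c\<bar>"
    using assms by (auto intro: mult_right_mono[of 1 "real k", simplified])
  ultimately show ?thesis
    unfolding B abs_le_iff using kr sums by (auto simp only: le_max_iff_disj) linarith+
qed

end

theorem Anorm_over_k_tendsto:
  assumes t_le: "\<forall>k\<ge>1. \<forall>j<n. t k j \<le> ereal (\<tau> k)"
    and sums: "(\<lambda>k. (\<Sum>l<k. a (Suc l)) / real k) \<longlonglongrightarrow> \<mu>"
    and \<tau>: "(\<lambda>k. \<tau> k / real k) \<longlonglongrightarrow> 0"
    and rho: "0 \<le> max_cycle_mean n D"
  shows "(\<lambda>k. Anorm k / real k) \<longlonglongrightarrow> max \<mu> (max_cycle_mean n D)"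
proof -
  obtain v where v: "\<forall>l<n. \<forall>j<n. D l j + v j \<le> max_cycle_mean n D + v l"
    using subeigenvector_exists[OF n_pos] .
  obtain i C where i: "i < n" and lower: "\<And>k. real (Suc k) * max_cycle_mean n D - C \<le> max_walk n D k i i"
    using max_walk_linear_lower_bound[OF n_pos] by blast
  have "\<forall>j<n. v j \<le> Max (v ` {..<n})" "\<forall>j<n. Min (v ` {..<n}) \<le> v j" by auto
  note upper = Anorm_le[OF v this t_le]
  show ?thesis
  proof (rule growth_rate_tendsto_of_bounds[where N = "\<lambda>k. Anorm k", OF _ sums \<tau> rho])
    fix k :: nat
    assume "k \<ge> 1"
    then obtain k' where k: "k = Suc k'" by (cases k) auto
    have "real k * max_cycle_mean n D - C \<le> Anorm k"
      using lower[of k'] max_walk_le_Anorm[OF i, of k'] unfolding k by linarith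
    with sum_le_Anorm upper[OF \<open>k \<ge> 1\<close>] show "(\<Sum>l<k. a (Suc l)) \<le> Anorm k \<and> real k * max_cycle_mean n D - C \<le> Anorm k \<and>
      Anorm k \<le> max (\<Sum>l<k. a (Suc l)) (max (real k * max_cycle_mean n D + Max (v ` {..<n}) - Min (v ` {..<n}))
        (row_bound a \<tau> (max_cycle_mean n D) (Max (v ` {..<n})) k - Min (v ` {..<n})))"
      by (intro conjI)
  qed
qed

end

section \<open>A strong law of large numbers for square-integrable variables\<close>

lemma tendsto_0_of_eventually_abs_less_inverse_Suc:
  fixes f :: "'b \<Rightarrow> real"
  assumes "\<And>j. \<forall>\<^sub>F x in F. \<bar>f x\<bar> < 1 / real (Suc j)"
  shows "(f \<longlongrightarrow> 0) F"
proof (rule tendstoI)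
  fix e :: real
  assume "e > 0"
  then obtain j where j: "1 / real (Suc j) < e"
    using reals_Archimedean by (auto simp: inverse_eq_divide)
  show "\<forall>\<^sub>F x in F. dist (f x) 0 < e"
    using assms[of j] by eventually_elim (use j in simp)
qed

lemma floor_sqrt_at_top: "filterlim floor_sqrt at_top sequentially"
  unfolding filterlim_at_top
proof (intro allI)
  fix Z :: nat
  show "\<forall>\<^sub>F k in sequentially. Z \<le> floor_sqrt k"
    using eventually_ge_at_top[of "Z^2"] by eventually_elim (rule le_floor_sqrtI)
qed

lemma mono_over_n_tendsto_of_squares:
  fixes s :: "nat \<Rightarrow> real"
  assumes mono: "mono s" and nonneg: "\<And>k. 0 \<le> s k"
    and lim: "(\<lambda>m. s ((Suc m)^2) / real ((Suc m)^2)) \<longlonglongrightarrow> \<mu>"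
  shows "(\<lambda>k. s k / real k) \<longlonglongrightarrow> \<mu>"
proof -
  define w where "w m = s (m^2) / real (m^2)" for m
  have w: "w \<longlonglongrightarrow> \<mu>" unfolding w_def by (rule LIMSEQ_imp_Suc[OF lim])
  have r1: "(\<lambda>m. (real m / real (Suc m))^2) \<longlonglongrightarrow> 1^2"
    by (intro tendsto_power LIMSEQ_n_over_Suc_n)
  have r2: "(\<lambda>m. (real (Suc m) / real m)^2) \<longlonglongrightarrow> 1^2"
    by (intro tendsto_power LIMSEQ_Suc_n_over_n)
  have l1: "(\<lambda>m. w m * (real m / real (Suc m))^2) \<longlonglongrightarrow> \<mu> * 1"
    using tendsto_mult[OF w r1] by (simp only: power_one)
  have l2: "(\<lambda>m. w (Suc m) * (real (Suc m) / real m)^2) \<longlonglongrightarrow> \<mu> * 1"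
    using tendsto_mult[OF LIMSEQ_Suc[OF w] r2] by (simp only: power_one)
  have L: "(\<lambda>k. w (floor_sqrt k) * (real (floor_sqrt k) / real (Suc (floor_sqrt k)))^2) \<longlonglongrightarrow> \<mu>"
    using filterlim_compose[OF l1 floor_sqrt_at_top] by (simp only: mult_1_right)
  have U: "(\<lambda>k. w (Suc (floor_sqrt k)) * (real (Suc (floor_sqrt k)) / real (floor_sqrt k))^2) \<longlonglongrightarrow> \<mu>"
    using filterlim_compose[OF l2 floor_sqrt_at_top] by (simp only: mult_1_right)
  show ?thesis
  proof (rule tendsto_sandwich[OF _ _ L U])
    show "\<forall>\<^sub>F k in sequentially. w (floor_sqrt k) * (real (floor_sqrt k) / real (Suc (floor_sqrt k)))^2 \<le> s k / real k"
      using eventually_ge_at_top[of 1]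
    proof eventually_elim
      case (elim k)
      define q where "q = floor_sqrt k"
      have q0: "q > 0" using elim unfolding q_def by simp
      have qk: "q^2 \<le> k" "k < (Suc q)^2" unfolding q_def by (rule floor_sqrt_power2_le, rule Suc_floor_sqrt_power2_gt)
      have kp: "real k > 0" using elim by auto
      have kq: "real k \<le> real ((Suc q)^2)" by (simp only: of_nat_le_iff) (rule less_imp_le[OF qk(2)])
      have "w q * (real q / real (Suc q))^2 = s (q^2) / real ((Suc q)^2)"
        using q0 unfolding w_def by (simp add: power_divide)
      also have "\<dots> \<le> s (q^2) / real k"
        using kq kp nonneg by (intro divide_left_mono) auto
      also have "\<dots> \<le> s k / real k"
        using qk kp mono by (intro divide_right_mono) (auto simp: mono_def)
      finally show ?case unfolding q_def .
    qed
    show "\<forall>\<^sub>F k in sequentially. s k / real k \<le> w (Suc (floor_sqrt k)) * (real (Suc (floor_sqrt k)) / real (floor_sqrt k))^2"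
      using eventually_ge_at_top[of 1]
    proof eventually_elim
      case (elim k)
      define q where "q = floor_sqrt k"
      have q0: "q > 0" using elim unfolding q_def by simp
      have qk: "q^2 \<le> k" "k < (Suc q)^2" unfolding q_def by (rule floor_sqrt_power2_le, rule Suc_floor_sqrt_power2_gt)
      have kp: "real k > 0" using elim by auto
      have "s k / real k \<le> s ((Suc q)^2) / real k"
        using qk kp mono by (intro divide_right_mono) (auto simp: mono_def)
      also have "\<dots> \<le> s ((Suc q)^2) / real (q^2)"
        using qk kp nonneg q0 by (intro divide_left_mono) auto
      also have "\<dots> = w (Suc q) * (real (Suc q) / real q)^2"
        using q0 unfolding w_def by (simp add: power_divide)
      finally show ?case unfolding q_def .
    qed
  qed
qed

context prob_space
begin

lemma identically_distributed_integral:
  fixes g :: "'b \<Rightarrow> real"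
  assumes X: "X \<in> measurable M N" and Y: "Y \<in> measurable M N"
    and same_distr: "distr M N X = distr M N Y" and g: "g \<in> borel_measurable N"
  shows "integrable M (\<lambda>x. g (X x)) \<longleftrightarrow> integrable M (\<lambda>x. g (Y x))"
    and "(\<integral>x. g (X x) \<partial>M) = (\<integral>x. g (Y x) \<partial>M)"
  using integrable_distr_eq[OF X g] integrable_distr_eq[OF Y g] same_distr
    integral_distr[OF X g] integral_distr[OF Y g] by auto

lemma expectation_square_sum_indep_centered:
  fixes Z :: "nat \<Rightarrow> 'a \<Rightarrow> real"
  assumes indep: "indep_vars (\<lambda>_. borel) Z I" and J: "finite J" "J \<subseteq> I"
    and sq: "\<And>i. i \<in> I \<Longrightarrow> integrable M (\<lambda>x. (Z i x)^2)"
    and m0: "\<And>i. i \<in> I \<Longrightarrow> expectation (Z i) = 0"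
  shows "integrable M (\<lambda>x. (\<Sum>i\<in>J. Z i x)^2)"
    and "expectation (\<lambda>x. (\<Sum>i\<in>J. Z i x)^2) = (\<Sum>i\<in>J. expectation (\<lambda>x. (Z i x)^2))"
proof -
  have meas: "Z i \<in> borel_measurable M" if "i \<in> I" for i
    using indep that unfolding indep_vars_def by auto
  have int: "integrable M (Z i)" if "i \<in> I" for i
    using square_integrable_imp_integrable[OF meas[OF that] sq[OF that]] .
  have pr: "integrable M (\<lambda>x. Z i x * Z j x) \<and>
      expectation (\<lambda>x. Z i x * Z j x) = (if i = j then expectation (\<lambda>x. (Z i x)^2) else 0)"
    if ij: "i \<in> I" "j \<in> I" for i j
  proof (cases "i = j")
    case True
    then show ?thesis using sq[OF ij(1)] by (simp add: power2_eq_square)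
  next
    case False
    have ind2: "indep_vars (\<lambda>_. borel) Z {i, j}" using indep_vars_subset[OF indep] ij by auto
    have i2: "\<And>l. l \<in> {i, j} \<Longrightarrow> integrable M (Z l)" using int ij by auto
    have "integrable M (\<lambda>x. \<Prod>l\<in>{i, j}. Z l x)" by (rule indep_vars_integrable[OF _ ind2 i2]) simp
    moreover have "expectation (\<lambda>x. \<Prod>l\<in>{i, j}. Z l x) = (\<Prod>l\<in>{i, j}. expectation (Z l))"
      by (rule indep_vars_lebesgue_integral[OF _ ind2 i2]) simp
    ultimately show ?thesis using False m0 ij by simp
  qed
  have sqsum: "(\<Sum>i\<in>J. Z i x)^2 = (\<Sum>i\<in>J. \<Sum>j\<in>J. Z i x * Z j x)" for x
    by (simp add: power2_eq_square sum_product)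
  show "integrable M (\<lambda>x. (\<Sum>i\<in>J. Z i x)^2)"
    unfolding sqsum using pr J by (intro Bochner_Integration.integrable_sum) auto
  have "expectation (\<lambda>x. (\<Sum>i\<in>J. Z i x)^2) = (\<Sum>i\<in>J. expectation (\<lambda>x. \<Sum>j\<in>J. Z i x * Z j x))"
    unfolding sqsum using pr J by (intro Bochner_Integration.integral_sum Bochner_Integration.integrable_sum) auto
  also have "\<dots> = (\<Sum>i\<in>J. \<Sum>j\<in>J. expectation (\<lambda>x. Z i x * Z j x))"
    using pr J by (intro sum.cong refl Bochner_Integration.integral_sum) auto
  also have "\<dots> = (\<Sum>i\<in>J. \<Sum>j\<in>J. (if i = j then expectation (\<lambda>x. (Z i x)^2) else 0))"
  proof (intro sum.cong refl)
    fix i j assume "i \<in> J" "j \<in> J"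
    then show "expectation (\<lambda>x. Z i x * Z j x) = (if i = j then expectation (\<lambda>x. (Z i x)^2) else 0)"
      using pr[of i j] J by blast
  qed
  also have "\<dots> = (\<Sum>i\<in>J. expectation (\<lambda>x. (Z i x)^2))"
    using J by (simp add: sum.delta)
  finally show "expectation (\<lambda>x. (\<Sum>i\<in>J. Z i x)^2) = (\<Sum>i\<in>J. expectation (\<lambda>x. (Z i x)^2))" .
qed

text \<open>Chebyshev's inequality and the Borel--Cantelli lemma along the squares \<open>k = (m + 1)\<^sup>2\<close>,
  where the bounds \<open>\<sigma>\<^sup>2 / (e\<^sup>2 k)\<close> are summable.\<close>

lemma strong_law_centered_along_squares:
  fixes Z :: "nat \<Rightarrow> 'a \<Rightarrow> real"
  assumes indep: "indep_vars (\<lambda>_. borel) Z {1..}"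
    and sq: "\<And>i. i \<in> {1..} \<Longrightarrow> integrable M (\<lambda>x. (Z i x)^2)"
    and centered: "\<And>i. i \<in> {1..} \<Longrightarrow> expectation (Z i) = 0"
    and var: "\<And>i. i \<in> {1..} \<Longrightarrow> expectation (\<lambda>x. (Z i x)^2) = \<sigma>2"
  shows "AE x in M. (\<lambda>m. (\<Sum>l<(Suc m)^2. Z (Suc l) x) / real ((Suc m)^2)) \<longlonglongrightarrow> 0"
proof -
  define T where "T K x = (\<Sum>i\<in>Suc ` {..<K}. Z i x)" for K x
  have T_eq: "T K x = (\<Sum>l<K. Z (Suc l) x)" for K x
    unfolding T_def by (simp add: sum.reindex)
  have Z_meas[measurable]: "Z i \<in> borel_measurable M" if "i \<in> {1..}" for i
    using indep that unfolding indep_vars_def by auto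
  have [measurable]: "T K \<in> borel_measurable M" for K
    unfolding T_def by (intro borel_measurable_sum) auto
  have Suc_sub: "Suc ` {..<K} \<subseteq> {1..}" for K by auto
  have T_sq: "integrable M (\<lambda>x. (T K x)^2)" for K
    unfolding T_def using expectation_square_sum_indep_centered(1)[OF indep _ Suc_sub sq centered] by simp
  have T_var: "expectation (\<lambda>x. (T K x)^2) = real K * \<sigma>2" for K
  proof -
    have "expectation (\<lambda>x. (T K x)^2) = (\<Sum>i\<in>Suc ` {..<K}. expectation (\<lambda>x. (Z i x)^2))"
      unfolding T_def by (rule expectation_square_sum_indep_centered(2)[OF indep _ Suc_sub sq centered]) auto
    also have "\<dots> = (\<Sum>i\<in>Suc ` {..<K}. \<sigma>2)" using var by (intro sum.cong) auto
    finally show ?thesis by (simp add: card_image)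
  qed
  have T_mean: "expectation (T K) = 0" for K
    unfolding T_def using square_integrable_imp_integrable[OF Z_meas sq] centered
    by (subst Bochner_Integration.integral_sum) (auto intro!: sum.neutral)
  have Chebyshev: "prob {x \<in> space M. e * real K \<le> \<bar>T K x\<bar>} \<le> \<sigma>2 / e^2 * inverse (real K)"
    if "e > 0" "K > 0" for e K
  proof -
    have "prob {x \<in> space M. e * real K \<le> \<bar>T K x\<bar>} \<le> real K * \<sigma>2 / (e * real K)^2"
      using Chebyshev_inequality[OF _ T_sq[of K], where a = "e * real K"] that by (simp add: T_mean T_var)
    also have "\<dots> = \<sigma>2 / e^2 * inverse (real K)"
      using that by (simp add: power2_eq_square field_simps)
    finally show ?thesis .
  qed
  have eventually_small: "AE x in M. \<forall>\<^sub>F m in sequentially. \<bar>T ((Suc m)^2) x / real ((Suc m)^2)\<bar> < e"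
    if "e > 0" for e
  proof -
    define A where "A m = {x \<in> space M. e * real ((Suc m)^2) \<le> \<bar>T ((Suc m)^2) x\<bar>}" for m
    have A_meas: "A m \<in> sets M" for m unfolding A_def by measurable
    have A_bound: "measure M (A m) \<le> \<sigma>2 / e^2 * inverse (real (Suc m) ^ 2)" for m
      using Chebyshev[OF that, of "(Suc m)^2"] unfolding A_def by simp
    have "summable (\<lambda>m. inverse (real (Suc m) ^ 2))"
      using inverse_power_summable[of 2, where 'a=real] by (subst summable_Suc_iff) simp
    then have "summable (\<lambda>m. measure M (A m))"
      by (rule summable_comparison_test'[OF summable_mult[of _ "\<sigma>2 / e^2"]]) (use A_bound in auto)
    from borel_cantelli_AE1[OF A_meas _ this]
    have "AE x in M. \<forall>\<^sub>F m in sequentially. x \<in> space M - A m"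
      by (simp add: less_top[symmetric])
    then show ?thesis
    proof (rule AE_mp, intro AE_I2 impI)
      fix x
      assume "x \<in> space M" "\<forall>\<^sub>F m in sequentially. x \<in> space M - A m"
      then show "\<forall>\<^sub>F m in sequentially. \<bar>T ((Suc m)^2) x / real ((Suc m)^2)\<bar> < e"
        by (elim eventually_mono) (simp add: A_def abs_div divide_less_eq mult.commute)
    qed
  qed
  have "AE x in M. \<forall>j. \<forall>\<^sub>F m in sequentially. \<bar>T ((Suc m)^2) x / real ((Suc m)^2)\<bar> < 1 / real (Suc j)"
    unfolding AE_all_countable by (intro allI eventually_small) simp
  then show ?thesis
  proof (rule AE_mp, intro AE_I2 impI)
    fix x
    assume "\<forall>j. \<forall>\<^sub>F m in sequentially. \<bar>T ((Suc m)^2) x / real ((Suc m)^2)\<bar> < 1 / real (Suc j)"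
    then have "(\<lambda>m. T ((Suc m)^2) x / real ((Suc m)^2)) \<longlonglongrightarrow> 0"
      by (intro tendsto_0_of_eventually_abs_less_inverse_Suc) blast
    then show "(\<lambda>m. (\<Sum>l<(Suc m)^2. Z (Suc l) x) / real ((Suc m)^2)) \<longlonglongrightarrow> 0"
      by (simp only: T_eq)
  qed
qed

lemma strong_law_nonneg:
  fixes X :: "nat \<Rightarrow> 'a \<Rightarrow> 'b" and f :: "'b \<Rightarrow> real"
  assumes indep: "indep_vars (\<lambda>_. N) X {1..}"
    and ident: "\<And>k. k \<ge> 1 \<Longrightarrow> distr M N (X k) = distr M N (X 1)"
    and f[measurable]: "f \<in> borel_measurable N"
    and sq: "integrable M (\<lambda>x. (f (X 1 x))^2)"
    and nonneg: "\<And>y. 0 \<le> f y"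
  shows "AE x in M. (\<lambda>k. (\<Sum>l<k. f (X (Suc l) x)) / real k) \<longlonglongrightarrow> expectation (\<lambda>x. f (X 1 x))"
proof -
  define \<mu> where "\<mu> = expectation (\<lambda>x. f (X 1 x))"
  define Z where "Z i x = f (X i x) - \<mu>" for i x
  have X_meas: "X i \<in> measurable M N" if "i \<in> {1..}" for i
    using indep that unfolding indep_vars_def by auto
  note same_distr = identically_distributed_integral[OF X_meas X_meas[of 1] ident]
  have f_int: "integrable M (\<lambda>x. f (X 1 x))"
    by (rule square_integrable_imp_integrable[OF _ sq]) (use X_meas[of 1] in measurable)
  then have Z_sq1: "integrable M (\<lambda>x. (f (X 1 x) - \<mu>)^2)"
    using sq by (simp add: power2_diff)
  have "indep_vars (\<lambda>_. borel) Z {1..}"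
    unfolding Z_def by (rule indep_vars_compose2[OF indep]) measurable
  moreover have "integrable M (\<lambda>x. (Z i x)^2)" if "i \<in> {1..}" for i
    using same_distr(1)[of i "\<lambda>y. (f y - \<mu>)^2"] that Z_sq1 unfolding Z_def by auto
  moreover have "expectation (Z i) = 0" if "i \<in> {1..}" for i
  proof -
    have "integrable M (\<lambda>x. f (X i x))" "expectation (\<lambda>x. f (X i x)) = \<mu>"
      using same_distr[of i f] that f_int unfolding \<mu>_def by auto
    then show ?thesis unfolding Z_def by (simp add: prob_space)
  qed
  moreover have "expectation (\<lambda>x. (Z i x)^2) = expectation (\<lambda>x. (f (X 1 x) - \<mu>)^2)" if "i \<in> {1..}" for i
    using same_distr(2)[of i "\<lambda>y. (f y - \<mu>)^2"] that unfolding Z_def by auto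
  ultimately have "AE x in M. (\<lambda>m. (\<Sum>l<(Suc m)^2. Z (Suc l) x) / real ((Suc m)^2)) \<longlonglongrightarrow> 0"
    by (rule strong_law_centered_along_squares)
  then show ?thesis
  proof (rule AE_mp, intro AE_I2 impI)
    fix x
    assume Z_lim: "(\<lambda>m. (\<Sum>l<(Suc m)^2. Z (Suc l) x) / real ((Suc m)^2)) \<longlonglongrightarrow> 0"
    have avg_eq: "(\<Sum>l<K. Z (Suc l) x) / real K + \<mu> = (\<Sum>l<K. f (X (Suc l) x)) / real K"
      if "K > 0" for K
      using that unfolding Z_def by (simp add: sum_subtractf field_simps)
    then have "(\<lambda>m. (\<Sum>l<(Suc m)^2. Z (Suc l) x) / real ((Suc m)^2) + \<mu>)
        = (\<lambda>m. (\<Sum>l<(Suc m)^2. f (X (Suc l) x)) / real ((Suc m)^2))"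
      by (intro ext avg_eq) simp
    with tendsto_add[OF Z_lim tendsto_const[of \<mu>]]
    have "(\<lambda>m. (\<Sum>l<(Suc m)^2. f (X (Suc l) x)) / real ((Suc m)^2)) \<longlonglongrightarrow> \<mu>"
      by simp
    then show "(\<lambda>k. (\<Sum>l<k. f (X (Suc l) x)) / real k) \<longlonglongrightarrow> expectation (\<lambda>x. f (X 1 x))"
      unfolding \<mu>_def using nonneg
      by (intro mono_over_n_tendsto_of_squares) (auto intro!: sum_nonneg sum_mono2 simp: mono_def)
  qed
qed

theorem strong_law_of_large_numbers:
  fixes X :: "nat \<Rightarrow> 'a \<Rightarrow> 'b" and f :: "'b \<Rightarrow> real"
  assumes indep: "indep_vars (\<lambda>_. N) X {1..}"
    and ident: "\<And>k. k \<ge> 1 \<Longrightarrow> distr M N (X k) = distr M N (X 1)"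
    and f[measurable]: "f \<in> borel_measurable N"
    and sq: "integrable M (\<lambda>x. (f (X 1 x))^2)"
  shows "AE x in M. (\<lambda>k. (\<Sum>l<k. f (X (Suc l) x)) / real k) \<longlonglongrightarrow> expectation (\<lambda>x. f (X 1 x))"
proof -
  have [measurable]: "X 1 \<in> measurable M N"
    using indep unfolding indep_vars_def by auto
  have sq_part: "integrable M (\<lambda>x. (max (s * f (X 1 x)) 0)^2)" if "\<bar>s\<bar> = 1" for s
  proof (rule Bochner_Integration.integrable_bound[OF sq])
    have "s^2 = 1" using that power2_abs[of s] by simp
    then have "(max (s * a) 0)^2 \<le> a^2" for a by (auto simp: max_def power_mult_distrib)
    then show "AE x in M. norm ((max (s * f (X 1 x)) 0)^2) \<le> norm ((f (X 1 x))^2)"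
      by (intro AE_I2) simp
  qed measurable
  have int_part: "integrable M (\<lambda>x. max (s * f (X 1 x)) 0)" if "\<bar>s\<bar> = 1" for s
    by (rule square_integrable_imp_integrable[OF _ sq_part[OF that]]) measurable
  have lim_part: "AE x in M. (\<lambda>k. (\<Sum>l<k. max (s * f (X (Suc l) x)) 0) / real k)
      \<longlonglongrightarrow> expectation (\<lambda>x. max (s * f (X 1 x)) 0)" if "\<bar>s\<bar> = 1" for s
    by (rule strong_law_nonneg[OF indep ident _ sq_part[OF that]]) auto
  have pos_neg: "max a 0 - max (- a) 0 = (a::real)" for a by auto
  have expectation_split: "expectation (\<lambda>x. f (X 1 x))
      = expectation (\<lambda>x. max (1 * f (X 1 x)) 0) - expectation (\<lambda>x. max (- 1 * f (X 1 x)) 0)"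
    using Bochner_Integration.integral_diff[OF int_part int_part, of 1 "- 1"] by (simp add: pos_neg)
  have average_split: "(\<Sum>l<k. f (X (Suc l) x)) / real k = (\<Sum>l<k. max (1 * f (X (Suc l) x)) 0) / real k
      - (\<Sum>l<k. max (- 1 * f (X (Suc l) x)) 0) / real k" for k x
    by (simp add: diff_divide_distrib[symmetric] sum_subtractf[symmetric] pos_neg)
  have "\<bar>1 :: real\<bar> = 1" "\<bar>- 1 :: real\<bar> = 1" by simp_all
  from lim_part[OF this(1)] lim_part[OF this(2)] show ?thesis
    unfolding expectation_split average_split by eventually_elim (rule tendsto_diff)
qed

lemma eventually_less_integral_of_AE_tendsto:
  fixes h :: "nat \<Rightarrow> 'a \<Rightarrow> real"
  assumes integrable: "\<And>k. integrable M (h k)" and nonneg: "\<And>k. AE x in M. 0 \<le> h k x"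
    and lim: "AE x in M. (\<lambda>k. h k x) \<longlonglongrightarrow> H" and e: "e > 0"
  shows "\<forall>\<^sub>F k in sequentially. H - e < (\<integral>x. h k x \<partial>M)"
proof (cases "H - e < 0")
  case True
  have "0 \<le> (\<integral>x. h k x \<partial>M)" for k by (rule integral_nonneg_AE[OF nonneg])
  then show ?thesis using True by (intro always_eventually allI) (metis diff_gt_0_iff_gt less_le_trans)
next
  case False
  have [measurable]: "h k \<in> borel_measurable M" for k using integrable[of k] by auto
  have "(\<integral>\<^sup>+ x. liminf (\<lambda>k. ennreal (h k x)) \<partial>M) \<le> liminf (\<lambda>k. \<integral>\<^sup>+ x. ennreal (h k x) \<partial>M)"
    by (rule nn_integral_liminf) measurable
  moreover have "(\<integral>\<^sup>+ x. liminf (\<lambda>k. ennreal (h k x)) \<partial>M) = (\<integral>\<^sup>+ x. ennreal H \<partial>M)"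
  proof (rule nn_integral_cong_AE)
    show "AE x in M. liminf (\<lambda>k. ennreal (h k x)) = ennreal H"
      using lim by eventually_elim (rule lim_imp_Liminf, simp, rule tendsto_ennrealI)
  qed
  moreover have "(\<integral>\<^sup>+ x. ennreal H \<partial>M) = ennreal H" by (simp add: emeasure_space_1)
  moreover have "(\<lambda>k. \<integral>\<^sup>+ x. ennreal (h k x) \<partial>M) = (\<lambda>k. ennreal (\<integral>x. h k x \<partial>M))"
    by (intro ext nn_integral_eq_integral integrable nonneg)
  ultimately have Fatou: "ennreal H \<le> liminf (\<lambda>k. ennreal (\<integral>x. h k x \<partial>M))" by simp
  have "ennreal (H - e) < ennreal H" using False e by (subst ennreal_less_iff) auto
  then have "ennreal (H - e) < liminf (\<lambda>k. ennreal (\<integral>x. h k x \<partial>M))" using Fatou by (rule less_le_trans)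
  from less_LiminfD[OF this] show ?thesis
    by eventually_elim (use False in \<open>simp add: ennreal_less_iff\<close>)
qed

text \<open>Fatou's lemma applied to \<open>g k - f k \<ge> 0\<close> (Pratt's lemma).\<close>

lemma eventually_integral_less_generalized_dominated:
  fixes f g :: "nat \<Rightarrow> 'a \<Rightarrow> real"
  assumes f_int: "\<And>k. integrable M (f k)" and g_int: "\<And>k. integrable M (g k)"
    and bound: "\<And>k. AE x in M. \<bar>f k x\<bar> \<le> g k x"
    and f_lim: "AE x in M. (\<lambda>k. f k x) \<longlonglongrightarrow> F"
    and g_lim: "AE x in M. (\<lambda>k. g k x) \<longlonglongrightarrow> G"
    and g_integral_lim: "(\<lambda>k. \<integral>x. g k x \<partial>M) \<longlonglongrightarrow> G"
    and "F < a"
  shows "\<forall>\<^sub>F k in sequentially. (\<integral>x. f k x \<partial>M) < a"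
proof -
  define e where "e = (a - F) / 2"
  have e: "e > 0" using \<open>F < a\<close> unfolding e_def by simp
  have "\<forall>\<^sub>F k in sequentially. (G - F) - e < (\<integral>x. g k x - f k x \<partial>M)"
  proof (rule eventually_less_integral_of_AE_tendsto[OF _ _ _ e])
    show "integrable M (\<lambda>x. g k x - f k x)" for k using f_int g_int by auto
    show "AE x in M. 0 \<le> g k x - f k x" for k using bound[of k] by eventually_elim simp
    show "AE x in M. (\<lambda>k. g k x - f k x) \<longlonglongrightarrow> G - F"
      using f_lim g_lim by eventually_elim (intro tendsto_intros)
  qed
  moreover have "\<forall>\<^sub>F k in sequentially. (\<integral>x. g k x \<partial>M) < G + e"
    using order_tendstoD(2)[OF g_integral_lim, of "G + e"] e by simp
  ultimately show ?thesis
  proof eventually_elim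
    case (elim k)
    moreover have "(\<integral>x. g k x - f k x \<partial>M) = (\<integral>x. g k x \<partial>M) - (\<integral>x. f k x \<partial>M)"
      by (rule Bochner_Integration.integral_diff[OF g_int f_int])
    ultimately show ?case unfolding e_def by argo
  qed
qed

lemma integral_tendsto_generalized_dominated:
  fixes f g :: "nat \<Rightarrow> 'a \<Rightarrow> real"
  assumes f_int: "\<And>k. integrable M (f k)" and g_int: "\<And>k. integrable M (g k)"
    and bound: "\<And>k. AE x in M. \<bar>f k x\<bar> \<le> g k x"
    and f_lim: "AE x in M. (\<lambda>k. f k x) \<longlonglongrightarrow> F"
    and g_lim: "AE x in M. (\<lambda>k. g k x) \<longlonglongrightarrow> G"
    and g_integral_lim: "(\<lambda>k. \<integral>x. g k x \<partial>M) \<longlonglongrightarrow> G"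
  shows "(\<lambda>k. \<integral>x. f k x \<partial>M) \<longlonglongrightarrow> F"
proof (rule order_tendstoI)
  show "\<forall>\<^sub>F k in sequentially. (\<integral>x. f k x \<partial>M) < a" if "F < a" for a
    by (rule eventually_integral_less_generalized_dominated[OF f_int g_int bound f_lim g_lim g_integral_lim that])
  show "\<forall>\<^sub>F k in sequentially. a < (\<integral>x. f k x \<partial>M)" if "a < F" for a
  proof -
    have "\<forall>\<^sub>F k in sequentially. (\<integral>x. - f k x \<partial>M) < - a"
      using f_int bound f_lim that
      by (intro eventually_integral_less_generalized_dominated[OF _ g_int _ _ g_lim g_integral_lim])
        (auto intro: tendsto_minus)
    then show ?thesis by simp
  qed
qed

end

section \<open>The random system\<close>

lemma measurable_Amat_entry:
  assumes a: "a \<in> borel_measurable M" and t: "\<And>j. j < n \<Longrightarrow> (\<lambda>\<omega>. t \<omega> j) \<in> borel_measurable M"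
    and j: "j < Suc n"
  shows "(\<lambda>\<omega>. Amat n D (a \<omega>) (t \<omega>) l j) \<in> borel_measurable M"
  using a t[of "j - 1"] j by (cases "l = 0"; cases "j = 0") (simp_all add: Amat_def)

lemma measurable_mp_prod_entry:
  assumes a: "\<And>k. k \<ge> 1 \<Longrightarrow> (\<lambda>\<omega>. \<alpha> k \<omega>) \<in> borel_measurable M"
    and t: "\<And>k j. k \<ge> 1 \<Longrightarrow> j < n \<Longrightarrow> (\<lambda>\<omega>. T k j \<omega>) \<in> borel_measurable M"
  shows "i < Suc n \<Longrightarrow> j < Suc n \<Longrightarrow>
    (\<lambda>\<omega>. mp_prod (Suc n) (\<lambda>k. Amat n D (\<alpha> k \<omega>) (\<lambda>j. T k j \<omega>)) k i j) \<in> borel_measurable M"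
proof (induction k arbitrary: j)
  case 0
  then show ?case by simp
next
  case (Suc k)
  have A: "(\<lambda>\<omega>. Amat n D (\<alpha> (Suc k) \<omega>) (\<lambda>j. T (Suc k) j \<omega>) l j) \<in> borel_measurable M" for l
    by (rule measurable_Amat_entry[OF a t Suc.prems(2)]) auto
  have IH: "(\<lambda>\<omega>. mp_prod (Suc n) (\<lambda>k. Amat n D (\<alpha> k \<omega>) (\<lambda>j. T k j \<omega>)) k i l) \<in> borel_measurable M"
    if "l \<in> {..<Suc n}" for l
    using Suc.IH[of l] Suc.prems that by auto
  show ?case
    unfolding mp_prod.simps mp_mult_def
    by (rule borel_measurable_Max) (auto intro!: borel_measurable_ereal_add IH A)
qed

lemma measurable_norm_mp_prod:
  assumes a: "\<And>k. k \<ge> 1 \<Longrightarrow> (\<lambda>\<omega>. \<alpha> k \<omega>) \<in> borel_measurable M"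
    and t: "\<And>k j. k \<ge> 1 \<Longrightarrow> j < n \<Longrightarrow> (\<lambda>\<omega>. T k j \<omega>) \<in> borel_measurable M"
  shows "(\<lambda>\<omega>. real_of_ereal (mp_norm (Suc n) (mp_prod (Suc n) (\<lambda>k. Amat n D (\<alpha> k \<omega>) (\<lambda>j. T k j \<omega>)) k)))
     \<in> borel_measurable M"
proof -
  have "(\<lambda>\<omega>. Max ((\<lambda>p. (\<lambda>(i, j). mp_prod (Suc n) (\<lambda>k. Amat n D (\<alpha> k \<omega>) (\<lambda>j. T k j \<omega>)) k i j) p)
      ` ({..<Suc n} \<times> {..<Suc n}))) \<in> borel_measurable M"
    by (rule borel_measurable_Max) (auto intro!: measurable_mp_prod_entry[OF a t])
  then show ?thesis unfolding mp_norm_eq_Max_image by measurable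
qed

locale maxplus_block_system = prob_space M
  for M :: "'a measure" and n :: nat and \<alpha> :: "nat \<Rightarrow> 'a \<Rightarrow> real"
    and T :: "nat \<Rightarrow> nat \<Rightarrow> 'a \<Rightarrow> ereal" and D :: "nat \<Rightarrow> nat \<Rightarrow> real" +
  assumes n_pos: "n \<ge> 1"
    and indep: "indep_vars (\<lambda>_. borel \<Otimes>\<^sub>M PiM {..<n} (\<lambda>_. (borel :: ereal measure)))
      (\<lambda>k \<omega>. (\<alpha> k \<omega>, \<lambda>j\<in>{..<n}. T k j \<omega>)) {1..}"
    and ident: "\<And>k. k \<ge> 1 \<Longrightarrow>
      distr M (borel \<Otimes>\<^sub>M PiM {..<n} (\<lambda>_. (borel :: ereal measure))) (\<lambda>\<omega>. (\<alpha> k \<omega>, \<lambda>j\<in>{..<n}. T k j \<omega>))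
      = distr M (borel \<Otimes>\<^sub>M PiM {..<n} (\<lambda>_. (borel :: ereal measure))) (\<lambda>\<omega>. (\<alpha> 1 \<omega>, \<lambda>j\<in>{..<n}. T 1 j \<omega>))"
    and T_not_pinf: "\<And>k j \<omega>. k \<ge> 1 \<Longrightarrow> j < n \<Longrightarrow> \<omega> \<in> space M \<Longrightarrow> T k j \<omega> \<noteq> \<infinity>"
    and alpha_square_integrable: "integrable M (\<lambda>\<omega>. (\<alpha> 1 \<omega>)\<^sup>2)"
    and Tnorm_square_integrable: "integrable M (\<lambda>\<omega>. (real_of_ereal (Max ((\<lambda>j. T 1 j \<omega>) ` {..<n})))\<^sup>2)"
begin

abbreviation entry_space :: "(real \<times> (nat \<Rightarrow> ereal)) measure" where
  "entry_space \<equiv> borel \<Otimes>\<^sub>M PiM {..<n} (\<lambda>_. borel)"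

abbreviation X :: "nat \<Rightarrow> 'a \<Rightarrow> real \<times> (nat \<Rightarrow> ereal)" where
  "X k \<omega> \<equiv> (\<alpha> k \<omega>, \<lambda>j\<in>{..<n}. T k j \<omega>)"

abbreviation row_norm :: "real \<times> (nat \<Rightarrow> ereal) \<Rightarrow> real" where
  "row_norm y \<equiv> real_of_ereal (Max ((\<lambda>j. snd y j) ` {..<n}))"

abbreviation Tnorm :: "nat \<Rightarrow> 'a \<Rightarrow> real" where
  "Tnorm k \<omega> \<equiv> real_of_ereal (Max ((\<lambda>j. T k j \<omega>) ` {..<n}))"

abbreviation norm_prod :: "nat \<Rightarrow> 'a \<Rightarrow> real" where
  "norm_prod k \<omega> \<equiv> real_of_ereal (mp_norm (Suc n) (mp_prod (Suc n) (\<lambda>k. Amat n D (\<alpha> k \<omega>) (\<lambda>j. T k j \<omega>)) k))"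

abbreviation abs_partial_sum :: "nat \<Rightarrow> 'a \<Rightarrow> real" where
  "abs_partial_sum k \<omega> \<equiv> (\<Sum>l<k. \<bar>\<alpha> (Suc l) \<omega>\<bar>) + (\<Sum>l<k. \<bar>Tnorm (Suc l) \<omega>\<bar>)"

abbreviation abs_mean :: real where
  "abs_mean \<equiv> expectation (\<lambda>\<omega>. \<bar>\<alpha> 1 \<omega>\<bar>) + expectation (\<lambda>\<omega>. \<bar>Tnorm 1 \<omega>\<bar>)"

lemma X_measurable: "k \<ge> 1 \<Longrightarrow> X k \<in> measurable M entry_space"
  using indep unfolding indep_vars_def by auto

lemma alpha_measurable: "k \<ge> 1 \<Longrightarrow> \<alpha> k \<in> borel_measurable M"
  using measurable_compose[OF X_measurable measurable_fst] by simp

lemma T_measurable: "k \<ge> 1 \<Longrightarrow> j < n \<Longrightarrow> (\<lambda>\<omega>. T k j \<omega>) \<in> borel_measurable M"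
  using measurable_compose[OF measurable_compose[OF X_measurable measurable_snd]
      measurable_component_singleton[of j "{..<n}" "\<lambda>_. borel"]]
  by simp

lemma row_norm_measurable [measurable]: "row_norm \<in> borel_measurable entry_space"
proof -
  have "(\<lambda>y. snd y j) \<in> borel_measurable entry_space" if "j \<in> {..<n}" for j
    using measurable_compose[OF measurable_snd[of "borel :: real measure" "PiM {..<n} (\<lambda>_. borel)"]
        measurable_component_singleton[OF that, of "\<lambda>_. borel :: ereal measure"]]
    by simp
  then show ?thesis by measurable
qed

lemma Tnorm_eq_row_norm: "Tnorm k \<omega> = row_norm (X k \<omega>)"
  by (rule arg_cong[where f = "\<lambda>A. real_of_ereal (Max A)"], rule image_cong) auto

lemma T_le_Tnorm:
  assumes "\<omega> \<in> space M" "k \<ge> 1" "j < n"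
  shows "T k j \<omega> \<le> ereal (Tnorm k \<omega>)"
proof -
  have "Max ((\<lambda>j. T k j \<omega>) ` {..<n}) \<in> (\<lambda>j. T k j \<omega>) ` {..<n}"
    using n_pos by (intro Max_in) (auto simp: lessThan_empty_iff)
  then obtain j' where "j' < n" "Max ((\<lambda>j. T k j \<omega>) ` {..<n}) = T k j' \<omega>" by auto
  then have "Max ((\<lambda>j. T k j \<omega>) ` {..<n}) \<noteq> \<infinity>"
    using T_not_pinf assms by simp
  moreover have "T k j \<omega> \<le> Max ((\<lambda>j. T k j \<omega>) ` {..<n})"
    using assms by (intro Max_ge) auto
  ultimately show ?thesis
    by (cases "Max ((\<lambda>j. T k j \<omega>) ` {..<n})") auto
qed

lemma block_product_at: "\<omega> \<in> space M \<Longrightarrow> block_product n (\<lambda>k j. T k j \<omega>)"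
  using n_pos T_not_pinf by unfold_locales auto

lemma averages_tendsto:
  fixes g :: "real \<times> (nat \<Rightarrow> ereal) \<Rightarrow> real"
  assumes "g \<in> borel_measurable entry_space" "integrable M (\<lambda>\<omega>. (g (X 1 \<omega>))\<^sup>2)"
  shows "AE \<omega> in M. (\<lambda>k. (\<Sum>l<k. g (X (Suc l) \<omega>)) / real k) \<longlonglongrightarrow> expectation (\<lambda>\<omega>. g (X 1 \<omega>))"
  by (rule strong_law_of_large_numbers[OF indep ident assms])

lemma identically_distributed:
  fixes g :: "real \<times> (nat \<Rightarrow> ereal) \<Rightarrow> real"
  assumes "g \<in> borel_measurable entry_space" "integrable M (\<lambda>\<omega>. g (X 1 \<omega>))" "k \<ge> 1"
  shows "integrable M (\<lambda>\<omega>. g (X k \<omega>))" "expectation (\<lambda>\<omega>. g (X k \<omega>)) = expectation (\<lambda>\<omega>. g (X 1 \<omega>))"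
  using identically_distributed_integral[OF X_measurable[OF assms(3)] X_measurable[OF order.refl] ident[OF assms(3)] assms(1)]
    assms(2) by auto

lemma norm_prod_measurable: "norm_prod k \<in> borel_measurable M"
  by (rule measurable_norm_mp_prod[OF alpha_measurable T_measurable])

lemma alpha_abs_integrable:
  assumes "k \<ge> 1"
  shows "integrable M (\<lambda>\<omega>. \<bar>\<alpha> k \<omega>\<bar>)" "expectation (\<lambda>\<omega>. \<bar>\<alpha> k \<omega>\<bar>) = expectation (\<lambda>\<omega>. \<bar>\<alpha> 1 \<omega>\<bar>)"
proof -
  have "integrable M (\<lambda>\<omega>. \<bar>\<alpha> 1 \<omega>\<bar>)"
    using square_integrable_imp_integrable[OF alpha_measurable alpha_square_integrable] by simp
  then show "integrable M (\<lambda>\<omega>. \<bar>\<alpha> k \<omega>\<bar>)" "expectation (\<lambda>\<omega>. \<bar>\<alpha> k \<omega>\<bar>) = expectation (\<lambda>\<omega>. \<bar>\<alpha> 1 \<omega>\<bar>)"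
    using identically_distributed[of "\<lambda>y. \<bar>fst y\<bar>", OF _ _ assms] by simp_all
qed

lemma Tnorm_abs_integrable:
  assumes "k \<ge> 1"
  shows "integrable M (\<lambda>\<omega>. \<bar>Tnorm k \<omega>\<bar>)" "expectation (\<lambda>\<omega>. \<bar>Tnorm k \<omega>\<bar>) = expectation (\<lambda>\<omega>. \<bar>Tnorm 1 \<omega>\<bar>)"
proof -
  have "(\<lambda>\<omega>. row_norm (X 1 \<omega>)) \<in> borel_measurable M"
    by (rule measurable_compose[OF X_measurable row_norm_measurable]) simp
  then have "integrable M (\<lambda>\<omega>. row_norm (X 1 \<omega>))"
    using square_integrable_imp_integrable Tnorm_square_integrable unfolding Tnorm_eq_row_norm by blast
  note same_distr = identically_distributed[of "\<lambda>y. \<bar>row_norm y\<bar>", OF _ integrable_abs[OF this] assms]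
  show "integrable M (\<lambda>\<omega>. \<bar>Tnorm k \<omega>\<bar>)"
    unfolding Tnorm_eq_row_norm by (rule same_distr(1)) simp
  show "expectation (\<lambda>\<omega>. \<bar>Tnorm k \<omega>\<bar>) = expectation (\<lambda>\<omega>. \<bar>Tnorm 1 \<omega>\<bar>)"
    unfolding Tnorm_eq_row_norm by (rule same_distr(2)) simp
qed

theorem AE_norm_prod_over_k_tendsto:
  assumes rho: "0 \<le> max_cycle_mean n D"
  shows "AE \<omega> in M. (\<lambda>k. norm_prod k \<omega> / real k) \<longlonglongrightarrow> max (expectation (\<alpha> 1)) (max_cycle_mean n D)"
proof -
  have "AE \<omega> in M. (\<lambda>k. (\<Sum>l<k. fst (X (Suc l) \<omega>)) / real k) \<longlonglongrightarrow> expectation (\<lambda>\<omega>. fst (X 1 \<omega>))"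
    using alpha_square_integrable by (intro averages_tendsto) simp_all
  moreover have "AE \<omega> in M. (\<lambda>k. (\<Sum>l<k. row_norm (X (Suc l) \<omega>)) / real k) \<longlonglongrightarrow> expectation (\<lambda>\<omega>. row_norm (X 1 \<omega>))"
    using Tnorm_square_integrable unfolding Tnorm_eq_row_norm by (intro averages_tendsto) simp_all
  ultimately show ?thesis
    using AE_space
  proof eventually_elim
    case (elim \<omega>)
    have sums: "(\<lambda>k. (\<Sum>l<k. \<alpha> (Suc l) \<omega>) / real k) \<longlonglongrightarrow> expectation (\<alpha> 1)"
      using elim(1) by simp
    have "(\<lambda>k. (\<Sum>l<k. Tnorm (Suc l) \<omega>) / real k) \<longlonglongrightarrow> expectation (\<lambda>\<omega>. row_norm (X 1 \<omega>))"
      using elim(2) unfolding Tnorm_eq_row_norm .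
    then have "(\<lambda>k. Tnorm k \<omega> / real k) \<longlonglongrightarrow> 0"
      by (rule term_over_n_tendsto_0_of_averages)
    moreover have "\<forall>k\<ge>1. \<forall>j<n. T k j \<omega> \<le> ereal (Tnorm k \<omega>)"
      using T_le_Tnorm elim(3) by auto
    ultimately show ?case
      using block_product.Anorm_over_k_tendsto[OF block_product_at[OF elim(3)] _ sums _ rho] by simp
  qed
qed

text \<open>The constant comes from a subeigenvector of \<open>D\<close>, which depends on neither \<open>k\<close> nor \<open>\<omega>\<close>.\<close>

lemma abs_norm_prod_le:
  obtains C where "0 \<le> C" "\<And>k \<omega>. \<omega> \<in> space M \<Longrightarrow> k \<ge> 1 \<Longrightarrow>
    \<bar>norm_prod k \<omega>\<bar> \<le> abs_partial_sum k \<omega> + real k * C"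
proof -
  obtain v where v: "\<forall>l<n. \<forall>j<n. D l j + v j \<le> max_cycle_mean n D + v l"
    using subeigenvector_exists[OF n_pos] .
  have "\<forall>j<n. v j \<le> Max (v ` {..<n})" "\<forall>j<n. Min (v ` {..<n}) \<le> v j" by auto
  note bound = block_product.abs_Anorm_le[OF block_product_at v this]
  show ?thesis
  proof (rule that)
    fix k :: nat and \<omega>
    assume "\<omega> \<in> space M" "k \<ge> 1"
    moreover have "\<forall>k\<ge>1. \<forall>j<n. T k j \<omega> \<le> ereal (Tnorm k \<omega>)"
      using T_le_Tnorm \<open>\<omega> \<in> space M\<close> by auto
    ultimately show "\<bar>norm_prod k \<omega>\<bar> \<le> (\<Sum>l<k. \<bar>\<alpha> (Suc l) \<omega>\<bar>) + (\<Sum>l<k. \<bar>Tnorm (Suc l) \<omega>\<bar>)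
        + real k * (\<bar>max_cycle_mean n D\<bar> + 2 * \<bar>Max (v ` {..<n})\<bar> + \<bar>Min (v ` {..<n})\<bar>)"
      by (intro bound[where a = "\<lambda>k. \<alpha> k \<omega>"])
  qed simp
qed

lemma integrable_abs_partial_sum: "integrable M (abs_partial_sum k)"
  using alpha_abs_integrable(1) Tnorm_abs_integrable(1) by simp

lemma expectation_abs_partial_sum: "expectation (abs_partial_sum k) = real k * abs_mean"
proof -
  have "expectation (\<lambda>\<omega>. \<Sum>l<k. \<bar>\<alpha> (Suc l) \<omega>\<bar>) = (\<Sum>l<k. expectation (\<lambda>\<omega>. \<bar>\<alpha> (Suc l) \<omega>\<bar>))"
    by (intro Bochner_Integration.integral_sum alpha_abs_integrable(1)) simp
  also have "\<dots> = (\<Sum>l<k. expectation (\<lambda>\<omega>. \<bar>\<alpha> 1 \<omega>\<bar>))"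
    by (intro sum.cong refl alpha_abs_integrable(2)) simp
  finally have sum_alpha: "expectation (\<lambda>\<omega>. \<Sum>l<k. \<bar>\<alpha> (Suc l) \<omega>\<bar>) = real k * expectation (\<lambda>\<omega>. \<bar>\<alpha> 1 \<omega>\<bar>)"
    by simp
  have "expectation (\<lambda>\<omega>. \<Sum>l<k. \<bar>Tnorm (Suc l) \<omega>\<bar>) = (\<Sum>l<k. expectation (\<lambda>\<omega>. \<bar>Tnorm (Suc l) \<omega>\<bar>))"
    by (intro Bochner_Integration.integral_sum Tnorm_abs_integrable(1)) simp
  also have "\<dots> = (\<Sum>l<k. expectation (\<lambda>\<omega>. \<bar>Tnorm 1 \<omega>\<bar>))"
    by (intro sum.cong refl Tnorm_abs_integrable(2)) simp
  finally have sum_Tnorm: "expectation (\<lambda>\<omega>. \<Sum>l<k. \<bar>Tnorm (Suc l) \<omega>\<bar>) = real k * expectation (\<lambda>\<omega>. \<bar>Tnorm 1 \<omega>\<bar>)"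
    by simp
  have "integrable M (\<lambda>\<omega>. \<Sum>l<k. \<bar>\<alpha> (Suc l) \<omega>\<bar>)" "integrable M (\<lambda>\<omega>. \<Sum>l<k. \<bar>Tnorm (Suc l) \<omega>\<bar>)"
    by (intro Bochner_Integration.integrable_sum alpha_abs_integrable(1) Tnorm_abs_integrable(1); simp)+
  then show ?thesis
    using sum_alpha sum_Tnorm by (simp add: distrib_left del: abs_real_of_ereal)
qed

lemma AE_abs_partial_sum_over_k_tendsto:
  "AE \<omega> in M. (\<lambda>k. abs_partial_sum k \<omega> / real k) \<longlonglongrightarrow> abs_mean"
proof -
  have "AE \<omega> in M. (\<lambda>k. (\<Sum>l<k. \<bar>fst (X (Suc l) \<omega>)\<bar>) / real k) \<longlonglongrightarrow> expectation (\<lambda>\<omega>. \<bar>fst (X 1 \<omega>)\<bar>)"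
    using alpha_square_integrable by (intro averages_tendsto) simp_all
  moreover have "integrable M (\<lambda>\<omega>. \<bar>row_norm (X 1 \<omega>)\<bar>^2)"
    unfolding power2_abs using Tnorm_square_integrable unfolding Tnorm_eq_row_norm .
  then have "AE \<omega> in M. (\<lambda>k. (\<Sum>l<k. \<bar>row_norm (X (Suc l) \<omega>)\<bar>) / real k)
      \<longlonglongrightarrow> expectation (\<lambda>\<omega>. \<bar>row_norm (X 1 \<omega>)\<bar>)"
    by (rule averages_tendsto[rotated]) simp
  ultimately show ?thesis
  proof eventually_elim
    case (elim \<omega>)
    then show ?case
      unfolding add_divide_distrib Tnorm_eq_row_norm by (intro tendsto_intros) simp_all
  qed
qed

lemma integrable_norm_prod: "integrable M (norm_prod k)"
proof (cases "k = 0")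
  case True
  then show ?thesis by simp
next
  case False
  obtain C where C: "\<And>k \<omega>. \<omega> \<in> space M \<Longrightarrow> k \<ge> 1 \<Longrightarrow> \<bar>norm_prod k \<omega>\<bar> \<le> abs_partial_sum k \<omega> + real k * C"
    using abs_norm_prod_le by blast
  have "AE \<omega> in M. norm (norm_prod k \<omega>) \<le> norm (abs_partial_sum k \<omega> + real k * C)"
    using C False by (intro AE_I2) (force intro: order_trans[OF _ abs_ge_self])
  moreover have "integrable M (\<lambda>\<omega>. abs_partial_sum k \<omega> + real k * C)"
    using integrable_abs_partial_sum[of k] by simp
  ultimately show ?thesis
    by (intro Bochner_Integration.integrable_bound[OF _ norm_prod_measurable])
qed

theorem expectation_norm_prod_over_k_tendsto:
  assumes rho: "0 \<le> max_cycle_mean n D"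
  shows "(\<lambda>k. expectation (norm_prod k) / real k) \<longlonglongrightarrow> max (expectation (\<alpha> 1)) (max_cycle_mean n D)"
proof -
  obtain C where "0 \<le> C" and C: "\<And>k \<omega>. \<omega> \<in> space M \<Longrightarrow> k \<ge> 1 \<Longrightarrow>
      \<bar>norm_prod k \<omega>\<bar> \<le> abs_partial_sum k \<omega> + real k * C"
    using abs_norm_prod_le by blast
  define g where "g k \<omega> = abs_partial_sum k \<omega> / real k + C" for k \<omega>
  have "(\<lambda>k. expectation (\<lambda>\<omega>. norm_prod k \<omega> / real k)) \<longlonglongrightarrow> max (expectation (\<alpha> 1)) (max_cycle_mean n D)"
  proof (rule integral_tendsto_generalized_dominated)
    show "integrable M (\<lambda>\<omega>. norm_prod k \<omega> / real k)" for k
      using integrable_norm_prod by simp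
    show "integrable M (g k)" for k
      unfolding g_def using integrable_abs_partial_sum[of k] by simp
    show "AE \<omega> in M. \<bar>norm_prod k \<omega> / real k\<bar> \<le> g k \<omega>" for k
    proof (rule AE_I2)
      fix \<omega>
      assume "\<omega> \<in> space M"
      show "\<bar>norm_prod k \<omega> / real k\<bar> \<le> g k \<omega>"
      proof (cases "k = 0")
        case True
        then show ?thesis using \<open>0 \<le> C\<close> by (simp add: g_def)
      next
        case False
        then have "\<bar>norm_prod k \<omega>\<bar> / real k \<le> (abs_partial_sum k \<omega> + real k * C) / real k"
          using C[OF \<open>\<omega> \<in> space M\<close>] by (intro divide_right_mono) auto
        also have "\<dots> = g k \<omega>" using False by (simp add: g_def add_divide_distrib)
        finally show ?thesis by (simp add: abs_div)
      qed
    qed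
    show "AE \<omega> in M. (\<lambda>k. norm_prod k \<omega> / real k) \<longlonglongrightarrow> max (expectation (\<alpha> 1)) (max_cycle_mean n D)"
      by (rule AE_norm_prod_over_k_tendsto[OF rho])
    show "AE \<omega> in M. (\<lambda>k. g k \<omega>) \<longlonglongrightarrow> abs_mean + C"
      using AE_abs_partial_sum_over_k_tendsto
      by eventually_elim (unfold g_def, intro tendsto_intros)
    have "expectation (g k) = abs_mean + C" if "k \<ge> 1" for k
      using that integrable_abs_partial_sum[of k] unfolding g_def
      by (simp add: expectation_abs_partial_sum prob_space del: abs_real_of_ereal)
    then show "(\<lambda>k. expectation (g k)) \<longlonglongrightarrow> abs_mean + C"
      by (intro tendsto_eventually eventually_sequentiallyI) auto
  qed
  then show ?thesis by simp
qed

end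

theorem lemma3:
  fixes M :: "'a measure" and n :: nat
    and \<alpha> :: "nat \<Rightarrow> 'a \<Rightarrow> real"
    and T :: "nat \<Rightarrow> nat \<Rightarrow> 'a \<Rightarrow> ereal"
    and D :: "nat \<Rightarrow> nat \<Rightarrow> real"
  assumes "prob_space M"
    and "n \<ge> 1"
    and indep: "prob_space.indep_vars M
           (\<lambda>_. borel \<Otimes>\<^sub>M PiM {..<n} (\<lambda>_. (borel :: ereal measure)))
           (\<lambda>k \<omega>. (\<alpha> k \<omega>, \<lambda>j\<in>{..<n}. T k j \<omega>)) {1..}"
    and ident: "\<And>k. k \<ge> 1 \<Longrightarrow>
           distr M (borel \<Otimes>\<^sub>M PiM {..<n} (\<lambda>_. (borel :: ereal measure)))
                 (\<lambda>\<omega>. (\<alpha> k \<omega>, \<lambda>j\<in>{..<n}. T k j \<omega>))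
         = distr M (borel \<Otimes>\<^sub>M PiM {..<n} (\<lambda>_. (borel :: ereal measure)))
                 (\<lambda>\<omega>. (\<alpha> 1 \<omega>, \<lambda>j\<in>{..<n}. T 1 j \<omega>))"
    and T_not_pinf: "\<And>k j \<omega>. k \<ge> 1 \<Longrightarrow> j < n \<Longrightarrow> \<omega> \<in> space M \<Longrightarrow> T k j \<omega> \<noteq> \<infinity>"
    and Tnorm_real: "\<And>k \<omega>. k \<ge> 1 \<Longrightarrow> \<omega> \<in> space M \<Longrightarrow>
           Max ((\<lambda>j. T k j \<omega>) ` {..<n}) \<noteq> -\<infinity>"
    and alpha_int: "integrable M (\<alpha> 1)"
    and alpha_var: "integrable M (\<lambda>\<omega>. (\<alpha> 1 \<omega>)\<^sup>2)"
    and Tnorm_int: "integrable M (\<lambda>\<omega>. real_of_ereal (Max ((\<lambda>j. T 1 j \<omega>) ` {..<n})))"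
    and Tnorm_var: "integrable M (\<lambda>\<omega>. (real_of_ereal (Max ((\<lambda>j. T 1 j \<omega>) ` {..<n})))\<^sup>2)"
    and Tnorm_nonneg: "(\<integral>\<omega>. real_of_ereal (Max ((\<lambda>j. T 1 j \<omega>) ` {..<n})) \<partial>M) \<ge> 0"
    and mu1_nonneg: "(\<integral>\<omega>. \<alpha> 1 \<omega> \<partial>M) \<ge> 0"
    and mu2_pos: "mp_rho n (\<lambda>i j. ereal (D i j)) > 0"
  shows "(AE \<omega> in M.
            (\<lambda>k. real_of_ereal (mp_norm (Suc n)
                     (mp_prod (Suc n) (\<lambda>k. Amat n D (\<alpha> k \<omega>) (\<lambda>j. T k j \<omega>)) k)) / real k)
            \<longlonglongrightarrow> max (\<integral>\<omega>. \<alpha> 1 \<omega> \<partial>M) (real_of_ereal (mp_rho n (\<lambda>i j. ereal (D i j)))))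
       \<and> (\<forall>k. integrable M (\<lambda>\<omega>. real_of_ereal (mp_norm (Suc n)
                     (mp_prod (Suc n) (\<lambda>k. Amat n D (\<alpha> k \<omega>) (\<lambda>j. T k j \<omega>)) k))))
       \<and> (\<lambda>k. (\<integral>\<omega>. real_of_ereal (mp_norm (Suc n)
                     (mp_prod (Suc n) (\<lambda>k. Amat n D (\<alpha> k \<omega>) (\<lambda>j. T k j \<omega>)) k)) \<partial>M) / real k)
            \<longlonglongrightarrow> max (\<integral>\<omega>. \<alpha> 1 \<omega> \<partial>M) (real_of_ereal (mp_rho n (\<lambda>i j. ereal (D i j))))"
proof -
  \<comment> \<open>\<open>alpha_int\<close> and \<open>Tnorm_int\<close> follow from square integrability.\<close>
  interpret maxplus_block_system M n \<alpha> T D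
    by (intro maxplus_block_system.intro maxplus_block_system_axioms.intro assms)
  have rho: "real_of_ereal (mp_rho n (\<lambda>i j. ereal (D i j))) = max_cycle_mean n D"
    using mp_rho_eq_max_cycle_mean[OF \<open>n \<ge> 1\<close>] by simp
  have "0 \<le> max_cycle_mean n D"
    using mu2_pos mp_rho_eq_max_cycle_mean[OF \<open>n \<ge> 1\<close>] by simp
  then show ?thesis
    unfolding rho
    using AE_norm_prod_over_k_tendsto expectation_norm_prod_over_k_tendsto integrable_norm_prod
    by blast
qed

end
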